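(* Let $n\ge2$, $1\le i\le n$, $\epsilon\in\{0,1\}$, and let $p$ denote the quotient maps $\sqcap^n_{i,\epsilon}\to\widehat{\sqcap}^n_{i,\epsilon}$ and $\square^n\to\widehat{\square}^n_{i,\epsilon}$. Let $a,b$ be vertices of $\square^n$ such that $a\neq\{i\}$ if $\epsilon=1$, and $b\neq\{1,\dots,n\}\setminus\{i\}$ if $\epsilon=0$. Then the maps \[\mathfrak{C}^{\square}(p):\mathfrak{C}^{\square}(\sqcap^n_{i,\epsilon})(a,b)\to\mathfrak{C}^{\square}(\widehat{\sqcap}^n_{i,\epsilon})(pa,pb)\quad\text{and}\quad\mathfrak{C}^{\square}(p):\mathfrak{C}^{\square}(\square^n)(a,b)\to\mathfrak{C}^{\square}(\widehat{\square}^n_{i,\epsilon})(pa,pb)\] are isomorphisms of simplicial sets.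
   Context: Cubical sets: presheaves on the category $\square$ with objects $[1]^n$ and morphisms generated by faces $\partial_{i,\epsilon}$ (insert $\epsilon$ at coordinate $i$), degeneracies (delete a coordinate) and negative connections ($\gamma_{i,0}$ replaces $(x_i,x_{i+1})$ by $\max(x_i,x_{i+1})$); $\square^n$ is representable; its vertices are subsets of $\{1,\dots,n\}$ (a vertex is the set of coordinates equal to $1$). Boxes: $\sqcap^n_{i,\epsilon}\subseteq\square^n$ is the union of all codimension-one faces of $\square^n$ except the image of $\partial_{i,\epsilon}$. The critical edge $e_{i,\epsilon}$ is the edge from $\emptyset$ to $\{i\}$ if $\epsilon=1$, and from $\{1,\dots,n\}\setminus\{i\}$ to $\{1,\dots,n\}$ if $\epsilon=0$. $\widehat{\square}^n_{i,\epsilon}$ and $\widehat{\sqcap}^n_{i,\epsilon}$ are the quotients of $\square^n$ and $\sqcap^n_{i,\epsilon}$ collapsing the critical edge to a point. Rigidification: $I_m$ is $m$ copies of $\square^1$ glued end to start (with distinguished endpoints); $\mathbb{I}_{k,m}$ is $I_k,\square^2,I_{m-2-k}$ glued end to start through $\emptyset,\{1,2\}$ of $\square^2$; $s_{k,m},t_{k,m}:I_m\to\mathbb{I}_{k,m}$ are the identity on the other edges and send edges $k+1,k+2$ to $\emptyset\to\{2\}\to\{1,2\}$, resp. $\emptyset\to\{1\}\to\{1,2\}$. For a cubical set $S$ with vertices $a,b$, $\mathfrak{C}^{\square}_{path}(S)(a,b)$ is the set of maps $I_m\to S$ sending endpoints to $a,b$, modulo the equivalence generated by $\gamma\sim\gamma'\circ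 h$ ($h$ endpoint-preserving), preordered by the reflexive-transitive closure of $[F\circ s_{k,m}]\leadsto[F\circ t_{k,m}]$; concatenation gives a preorder-enriched category. $\mathfrak{C}^{\square}$ is the left Kan extension along Yoneda of $[1]^n\mapsto N(\mathfrak{C}^{\square}_{path}(\square^n))$ (nerve homwise); objects of $\mathfrak{C}^{\square}(S)$ are the vertices of $S$. *)

theory Defs
  imports Main
begin

text \<open>A vertex of [1]^n is the set of coordinates (in {1..n}) equal to 1.
  A morphism [1]^m -> [1]^n of the cube category is represented by its
  (faithful) action on vertices, extended by {} outside Pow {1..m}.\<close>

type_synonym vmap = "nat set \<Rightarrow> nat set"

definition rest :: "nat \<Rightarrow> vmap \<Rightarrow> vmap" where
  "rest m f = (\<lambda>A. if A \<subseteq> {1..m} then f A else {})"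

text \<open>face i e : [1]^(n-1) -> [1]^n inserts e at coordinate i.\<close>
definition face :: "nat \<Rightarrow> bool \<Rightarrow> vmap" where
  "face i e A = {j\<in>A. j < i} \<union> Suc ` {j\<in>A. i \<le> j} \<union> (if e then {i} else {})"

text \<open>degen i : [1]^n -> [1]^(n-1) deletes coordinate i.\<close>
definition degen :: "nat \<Rightarrow> vmap" where
  "degen i A = {j\<in>A. j < i} \<union> (\<lambda>j. j - 1) ` {j\<in>A. i < j}"

text \<open>conn i (negative connection gamma_{i,0}) : [1]^n -> [1]^(n-1)
  replaces (x_i, x_(i+1)) by max(x_i, x_(i+1)).\<close>
definition conn :: "nat \<Rightarrow> vmap" where
  "conn i A = {j\<in>A. j < i} \<union> (if i \<in> A \<or> Suc i \<in> A then {i} else {})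
      \<union> (\<lambda>j. j - 1) ` {j\<in>A. Suc i < j}"

inductive cmor :: "nat \<Rightarrow> nat \<Rightarrow> vmap \<Rightarrow> bool" where
  cid: "cmor m m (rest m id)"
| cface: "cmor l m f \<Longrightarrow> 1 \<le> i \<Longrightarrow> i \<le> Suc m \<Longrightarrow> cmor l (Suc m) (rest l (face i e \<circ> f))"
| cdegen: "cmor l (Suc m) f \<Longrightarrow> 1 \<le> i \<Longrightarrow> i \<le> Suc m \<Longrightarrow> cmor l m (rest l (degen i \<circ> f))"
| cconn: "cmor l (Suc (Suc m)) f \<Longrightarrow> 1 \<le> i \<Longrightarrow> i \<le> Suc m \<Longrightarrow> cmor l (Suc m) (rest l (conn i \<circ> f))"

text \<open>A cubical set: cells in each dimension, and the action
  act m m' f : S_m' -> S_m of a cube morphism f : [1]^m -> [1]^m'.\<close>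
type_synonym 'a cset = "(nat \<Rightarrow> 'a set) \<times> (nat \<Rightarrow> nat \<Rightarrow> vmap \<Rightarrow> 'a \<Rightarrow> 'a)"

definition cells :: "'a cset \<Rightarrow> nat \<Rightarrow> 'a set" where "cells S = fst S"
definition act :: "'a cset \<Rightarrow> nat \<Rightarrow> nat \<Rightarrow> vmap \<Rightarrow> 'a \<Rightarrow> 'a" where "act S = snd S"

definition cube :: "nat \<Rightarrow> vmap cset" where
  "cube n = ((\<lambda>m. {f. cmor m n f}), (\<lambda>m m' f x. rest m (x \<circ> f)))"

definition box :: "nat \<Rightarrow> nat \<Rightarrow> bool \<Rightarrow> vmap cset" where
  "box n i e = ((\<lambda>m. {f. cmor m n f \<and> (\<exists>j d g. 1 \<le> j \<and> j \<le> n \<and> (j, d) \<noteq> (i, e)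
                     \<and> cmor m (n - 1) g \<and> f = rest m (face j d \<circ> g))}),
                (\<lambda>m m' f x. rest m (x \<circ> f)))"

definition crit :: "nat \<Rightarrow> nat \<Rightarrow> bool \<Rightarrow> vmap" where
  "crit n i e = (if e then rest 1 (\<lambda>A. if 1 \<in> A then {i} else {})
                 else rest 1 (\<lambda>A. if 1 \<in> A then {1..n} else {1..n} - {i}))"

text \<open>The m-cells in the image of the critical edge (collapsed to a single cell).\<close>
definition collapsed :: "nat \<Rightarrow> nat \<Rightarrow> bool \<Rightarrow> nat \<Rightarrow> vmap set" where
  "collapsed n i e m = {rest m (crit n i e \<circ> y) | y. cmor m 1 y}"

definition qcls :: "'a set \<Rightarrow> 'a \<Rightarrow> 'a set" where
  "qcls C x = (if x \<in> C then C else {x})"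

text \<open>Quotient of a cubical set collapsing the subcomplex C to a point
  (pushout along C -> point).\<close>
definition quot :: "'a cset \<Rightarrow> (nat \<Rightarrow> 'a set) \<Rightarrow> 'a set cset" where
  "quot S C = ((\<lambda>m. qcls (C m) ` cells S m),
               (\<lambda>m m' f c. qcls (C m) (act S m m' f (SOME x. x \<in> c))))"

definition cube_hat :: "nat \<Rightarrow> nat \<Rightarrow> bool \<Rightarrow> vmap set cset" where
  "cube_hat n i e = quot (cube n) (collapsed n i e)"

definition box_hat :: "nat \<Rightarrow> nat \<Rightarrow> bool \<Rightarrow> vmap set cset" where
  "box_hat n i e = quot (box n i e) (collapsed n i e)"

definition qmap :: "nat \<Rightarrow> nat \<Rightarrow> bool \<Rightarrow> nat \<Rightarrow> vmap \<Rightarrow> vmap set" where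
  "qmap n i e m = qcls (collapsed n i e m)"

definition vtx :: "nat set \<Rightarrow> vmap" where
  "vtx A = rest 0 (\<lambda>_. A)"

text \<open>A map I_m -> square^N (by Yoneda) is a composable list of m 1-cells;
  the source / target of a 1-cell e are e {} and e {1}.\<close>
definition is_path :: "nat \<Rightarrow> nat set \<Rightarrow> nat set \<Rightarrow> vmap list \<Rightarrow> bool" where
  "is_path N u w es \<longleftrightarrow> u \<subseteq> {1..N} \<and> w \<subseteq> {1..N} \<and> (\<forall>e\<in>set es. cmor 1 N e) \<and>
     (if es = [] then u = w
      else hd es {} = u \<and> last es {1} = w \<and>
           (\<forall>j. Suc j < length es \<longrightarrow> (es ! j) {1} = (es ! Suc j) {}))"

text \<open>gamma ~ gamma' o h for endpoint-preserving h : I_m -> I_m' amounts to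
  inserting degenerate edges.\<close>
definition pins :: "nat \<Rightarrow> nat set \<Rightarrow> nat set \<Rightarrow> (vmap list \<times> vmap list) set" where
  "pins N u w = {(es, es'). is_path N u w es \<and> is_path N u w es' \<and>
      (\<exists>ps qs v. es = ps @ qs \<and> es' = ps @ [rest 1 (\<lambda>_. v)] @ qs)}"

definition pequiv :: "nat \<Rightarrow> nat set \<Rightarrow> nat set \<Rightarrow> (vmap list \<times> vmap list) set" where
  "pequiv N u w = (pins N u w \<union> (pins N u w)\<inverse>)\<^sup>*"

text \<open>[F o s_{k,m}] ~> [F o t_{k,m}] for F : II_{k,m} -> square^N with 2-cell s.\<close>
definition pstep :: "nat \<Rightarrow> nat set \<Rightarrow> nat set \<Rightarrow> (vmap list \<times> vmap list) set" where
  "pstep N u w = {(es, es'). is_path N u w es \<and> is_path N u w es' \<and>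
      (\<exists>ps qs s. cmor 2 N s \<and>
         es = ps @ [rest 1 (s \<circ> face 1 False), rest 1 (s \<circ> face 2 True)] @ qs \<and>
         es' = ps @ [rest 1 (s \<circ> face 2 False), rest 1 (s \<circ> face 1 True)] @ qs)}"

definition pleq :: "nat \<Rightarrow> nat set \<Rightarrow> nat set \<Rightarrow> (vmap list \<times> vmap list) set" where
  "pleq N u w = (pequiv N u w \<union> pstep N u w)\<^sup>*"

text \<open>k-simplices of the nerve of C_path(square^N)(u,w), by representatives
  (identified below up to pointwise path equivalence).\<close>
definition nsimp :: "nat \<Rightarrow> nat set \<Rightarrow> nat set \<Rightarrow> nat \<Rightarrow> vmap list list \<Rightarrow> bool" where
  "nsimp N u w k gs \<longleftrightarrow> length gs = Suc k \<and> (\<forall>g\<in>set gs. is_path N u w g) \<and>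
      (\<forall>j<k. (gs ! j, gs ! Suc j) \<in> pleq N u w)"

section \<open>C^square(S) as the colimit (left Kan extension), level k\<close>

text \<open>A generator at level k: a cube x in S_N together with a k-simplex of
  C^square(square^N)(u,w).\<close>
type_synonym 'a datum = "nat \<times> 'a \<times> nat set \<times> nat set \<times> vmap list list"

definition vert :: "'a cset \<Rightarrow> nat \<Rightarrow> 'a \<Rightarrow> nat set \<Rightarrow> 'a" where
  "vert S N x u = act S 0 N (rest 0 (\<lambda>_. u)) x"

fun dvalid :: "'a cset \<Rightarrow> nat \<Rightarrow> 'a datum \<Rightarrow> bool" where
  "dvalid S k (N, x, u, w, gs) \<longleftrightarrow> x \<in> cells S N \<and> nsimp N u w k gs"

fun dsrc :: "'a cset \<Rightarrow> 'a datum \<Rightarrow> 'a" where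
  "dsrc S (N, x, u, w, gs) = vert S N x u"

fun dtgt :: "'a cset \<Rightarrow> 'a datum \<Rightarrow> 'a" where
  "dtgt S (N, x, u, w, gs) = vert S N x w"

definition cvalid :: "'a cset \<Rightarrow> nat \<Rightarrow> 'a \<Rightarrow> 'a \<Rightarrow> 'a datum list \<Rightarrow> bool" where
  "cvalid S k a b ds \<longleftrightarrow> a \<in> cells S 0 \<and> b \<in> cells S 0 \<and> (\<forall>d\<in>set ds. dvalid S k d) \<and>
     (if ds = [] then a = b
      else dsrc S (hd ds) = a \<and> dtgt S (last ds) = b \<and>
           (\<forall>j. Suc j < length ds \<longrightarrow> dtgt S (ds ! j) = dsrc S (ds ! Suc j)))"

text \<open>Generating relations of the colimit: change of representatives,
  transport along cube maps, composition inside one cube, identities.\<close>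
definition basic :: "'a cset \<Rightarrow> nat \<Rightarrow> ('a datum list \<times> 'a datum list) set" where
  "basic S k =
     {([(N, x, u, w, gs)], [(N, x, u, w, gs')]) | N x u w gs gs'.
        list_all2 (\<lambda>g g'. (g, g') \<in> pequiv N u w) gs gs'}
   \<union> {([(M, act S M N f x, u, w, gs)], [(N, x, f u, f w, map (map (\<lambda>e. rest 1 (f \<circ> e))) gs)])
        | M N f x u w gs. cmor M N f \<and> x \<in> cells S N}
   \<union> {([(N, x, u, v, gs), (N, x, v, w, hs)], [(N, x, u, w, map2 (@) gs hs)])
        | N x u v w gs hs. True}
   \<union> {([(N, x, u, u, replicate (Suc k) [])], []) | N x u. True}"

definition crel :: "'a cset \<Rightarrow> nat \<Rightarrow> ('a datum list \<times> 'a datum list) set" where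
  "crel S k = {(ds @ l @ es, ds @ r @ es) | ds l r es. (l, r) \<in> basic S k \<and>
      (\<exists>a b. cvalid S k a b (ds @ l @ es) \<and> cvalid S k a b (ds @ r @ es))}"

definition ceq :: "'a cset \<Rightarrow> nat \<Rightarrow> ('a datum list \<times> 'a datum list) set" where
  "ceq S k = (crel S k \<union> (crel S k)\<inverse>)\<^sup>*"

definition Chom :: "'a cset \<Rightarrow> nat \<Rightarrow> 'a \<Rightarrow> 'a \<Rightarrow> 'a datum list set set" where
  "Chom S k a b = {ceq S k `` {ds} | ds. cvalid S k a b ds}"

fun dmap :: "(nat \<Rightarrow> 'a \<Rightarrow> 'b) \<Rightarrow> 'a datum \<Rightarrow> 'b datum" where
  "dmap phi (N, x, u, w, gs) = (N, phi N x, u, w, gs)"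

definition Cmap :: "'b cset \<Rightarrow> (nat \<Rightarrow> 'a \<Rightarrow> 'b) \<Rightarrow> nat \<Rightarrow> 'a datum list set \<Rightarrow> 'b datum list set" where
  "Cmap T phi k c = ceq T k `` {map (dmap phi) (SOME ds. ds \<in> c)}"

end

(*
  In a cubical subset of the cube that contains the critical edge, a generator of the
  rigidification whose two end vertices lie on the critical edge is already equivalent to an
  identity or to the critical edge itself: it factors through a cell that is injective on
  vertices, and there all its paths are equivalent to a single edge between the two images.
  Consequently a chain of generators in the quotient can be lifted: drop its collapsed generators,
  lift the others, and insert the critical edge wherever the lifted chain jumps from its source to
  its target. The hypotheses on a and b guarantee that no jump in the opposite direction occurs.
  Lifting respects the generating relations of the colimit and is inverse, up to these relations,
  to the map induced by the quotient.
*)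

theory Submission
  imports Defs
begin

declare One_nat_def [simp del]

section \<open>Morphisms of the cube category\<close>

definition monotone_vmap :: "nat \<Rightarrow> nat \<Rightarrow> vmap \<Rightarrow> bool" where
  "monotone_vmap l m f \<longleftrightarrow> (\<forall>A. \<not> A \<subseteq> {1..l} \<longrightarrow> f A = {}) \<and> (\<forall>A. A \<subseteq> {1..l} \<longrightarrow> f A \<subseteq> {1..m})
     \<and> (\<forall>A B. A \<subseteq> B \<longrightarrow> B \<subseteq> {1..l} \<longrightarrow> f A \<subseteq> f B)"

lemma monotone_vmap_rest_comp:
  assumes "monotone_vmap l m f"
    and "\<And>A. A \<subseteq> {1..m} \<Longrightarrow> h A \<subseteq> {1..m'}" and "\<And>A B. A \<subseteq> B \<Longrightarrow> h A \<subseteq> h B"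
  shows "monotone_vmap l m' (rest l (h \<circ> f))"
  using assms unfolding monotone_vmap_def by (simp add: rest_def)

lemma face_range: "A \<subseteq> {1..m} \<Longrightarrow> 1 \<le> i \<Longrightarrow> i \<le> Suc m \<Longrightarrow> face i e A \<subseteq> {1..Suc m}"
  by (auto simp: face_def)

lemma degen_range: "A \<subseteq> {1..Suc m} \<Longrightarrow> 1 \<le> i \<Longrightarrow> i \<le> Suc m \<Longrightarrow> degen i A \<subseteq> {1..m}"
  by (fastforce simp: degen_def)

lemma conn_range: "A \<subseteq> {1..Suc (Suc m)} \<Longrightarrow> 1 \<le> i \<Longrightarrow> i \<le> Suc m \<Longrightarrow> conn i A \<subseteq> {1..Suc m}"
  unfolding conn_def by (auto; force)

lemma face_mono: "A \<subseteq> B \<Longrightarrow> face i e A \<subseteq> face i e B"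
  by (auto simp: face_def)

lemma degen_mono: "A \<subseteq> B \<Longrightarrow> degen i A \<subseteq> degen i B"
  by (auto simp: degen_def)

lemma conn_mono: "A \<subseteq> B \<Longrightarrow> conn i A \<subseteq> conn i B"
  by (auto simp: conn_def)

lemma cmor_monotone_vmap: "cmor l m f \<Longrightarrow> monotone_vmap l m f"
proof (induction rule: cmor.induct)
  case (cid m)
  then show ?case by (auto simp: monotone_vmap_def rest_def)
next
  case (cface l m f i e)
  then show ?case by (intro monotone_vmap_rest_comp face_range face_mono) auto
next
  case (cdegen l m f i)
  then show ?case by (intro monotone_vmap_rest_comp degen_range degen_mono) auto
next
  case (cconn l m f i)
  then show ?case by (intro monotone_vmap_rest_comp conn_range conn_mono) auto
qed

lemma cmor_supp: "cmor l m f \<Longrightarrow> \<not> A \<subseteq> {1..l} \<Longrightarrow> f A = {}"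
  using cmor_monotone_vmap by (auto simp: monotone_vmap_def)

lemma cmor_range: "cmor l m f \<Longrightarrow> A \<subseteq> {1..l} \<Longrightarrow> f A \<subseteq> {1..m}"
  using cmor_monotone_vmap by (auto simp: monotone_vmap_def)

lemma cmor_mono: "cmor l m f \<Longrightarrow> A \<subseteq> B \<Longrightarrow> B \<subseteq> {1..l} \<Longrightarrow> f A \<subseteq> f B"
  using cmor_monotone_vmap unfolding monotone_vmap_def by blast

lemma cmor_comp: "cmor m p g \<Longrightarrow> cmor l m f \<Longrightarrow> cmor l p (rest l (g \<circ> f))"
proof (induction rule: cmor.induct)
  case (cid m)
  have "rest l (rest m id \<circ> f) = f"
    using cmor_range[OF cid] cmor_supp[OF cid] by (auto simp: rest_def fun_eq_iff)
  then show ?case using cid by metis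
next
  case (cface m' p' g i e)
  have "rest l (rest m' (face i e \<circ> g) \<circ> f) = rest l (face i e \<circ> rest l (g \<circ> f))"
    using cmor_range[OF cface.prems] by (auto simp: rest_def fun_eq_iff)
  then show ?case using cface cmor.cface by metis
next
  case (cdegen m' p' g i)
  have "rest l (rest m' (degen i \<circ> g) \<circ> f) = rest l (degen i \<circ> rest l (g \<circ> f))"
    using cmor_range[OF cdegen.prems] by (auto simp: rest_def fun_eq_iff)
  then show ?case using cdegen cmor.cdegen by metis
next
  case (cconn m' p' g i)
  have "rest l (rest m' (conn i \<circ> g) \<circ> f) = rest l (conn i \<circ> rest l (g \<circ> f))"
    using cmor_range[OF cconn.prems] by (auto simp: rest_def fun_eq_iff)
  then show ?case using cconn cmor.cconn by metis
qed

lemma cmor_to_point: "cmor l 0 (rest l (\<lambda>_. {}))"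
proof (induction l)
  case 0
  have "rest 0 id = rest 0 (\<lambda>_. {})" by (auto simp: rest_def fun_eq_iff)
  then show ?case using cmor.cid[of 0] by simp
next
  case (Suc l)
  have D: "cmor (Suc l) l (rest (Suc l) (degen 1 \<circ> rest (Suc l) id))"
    using cmor.cdegen[OF cmor.cid[of "Suc l"], of 1] by simp
  have "rest (Suc l) (rest l (\<lambda>_. {}) \<circ> rest (Suc l) (degen 1 \<circ> rest (Suc l) id)) = rest (Suc l) (\<lambda>_. {})"
    using cmor_range[OF D] by (auto simp: rest_def fun_eq_iff)
  then show ?case using cmor_comp[OF Suc D] by simp
qed

lemma cmor_const: "v \<subseteq> {1..m} \<Longrightarrow> cmor l m (rest l (\<lambda>_. v))"
proof (induction m arbitrary: v)
  case 0
  then show ?case using cmor_to_point by auto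
next
  case (Suc m)
  define v' where "v' = v - {Suc m}"
  have v': "v' \<subseteq> {1..m}" using Suc.prems by (auto simp: v'_def)
  have "rest l (face (Suc m) (Suc m \<in> v) \<circ> rest l (\<lambda>_. v')) = rest l (\<lambda>_. v)"
    using v' by (auto simp: rest_def fun_eq_iff face_def v'_def)
  then show ?case using cmor.cface[OF Suc.IH[OF v'], of "Suc m" "Suc m \<in> v"] by simp
qed

lemma vtx_cmor: "v \<subseteq> {1..m} \<Longrightarrow> cmor 0 m (vtx v)"
  unfolding vtx_def by (rule cmor_const)

lemma cmor0_eq_vtx: "cmor 0 m f \<Longrightarrow> f = vtx (f {})"
proof
  fix A assume "cmor 0 m f"
  then show "f A = vtx (f {}) A" using cmor_supp[of 0 m f A] by (cases "A = {}") (auto simp: vtx_def rest_def)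
qed

lemma vtx_eq_iff [simp]: "vtx u = vtx v \<longleftrightarrow> u = v"
  by (auto simp: vtx_def rest_def fun_eq_iff)

definition edge :: "nat set \<Rightarrow> nat set \<Rightarrow> vmap" where
  "edge u w = rest 1 (\<lambda>A. if 1 \<in> A then w else u)"

lemma edge_vals [simp]: "edge u w {} = u" "edge u w {1} = w"
  by (auto simp: edge_def rest_def)

lemma cmor1_eq_edge: "cmor 1 m f \<Longrightarrow> f = edge (f {}) (f {1})"
proof
  fix A assume f: "cmor 1 m f"
  show "f A = edge (f {}) (f {1}) A"
  proof (cases "A \<subseteq> {1..1}")
    case True
    then have "A = {} \<or> A = {1}" by auto
    then show ?thesis by (auto simp: edge_def rest_def)
  next
    case False
    then show ?thesis using cmor_supp[OF f False] by (simp add: edge_def rest_def)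
  qed
qed

lemma cmor1_mono: "cmor 1 m f \<Longrightarrow> f {} \<subseteq> f {1}"
  using cmor_mono[of 1 m f "{}" "{1}"] by auto

lemma edge_const: "edge v v = rest 1 (\<lambda>_. v)"
  by (auto simp: edge_def rest_def fun_eq_iff)

lemma edge_01: "edge {} {1} = rest 1 id"
  by (auto simp: edge_def rest_def fun_eq_iff)

lemma cmor_edge_01: "cmor 1 1 (edge {} {1})"
  using cmor.cid[of 1] edge_01 by simp

lemma rest1_comp_vals [simp]: "rest 1 (g \<circ> e) {} = g (e {})" "rest 1 (g \<circ> e) {1} = g (e {1})"
  by (auto simp: rest_def)

lemma rest1_comp_eq_edge: "cmor 1 M E \<Longrightarrow> cmor M K F \<Longrightarrow> rest 1 (F \<circ> E) = edge (F (E {})) (F (E {1}))"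
  using cmor1_eq_edge[OF cmor_comp] by (metis rest1_comp_vals)

lemma rest1_comp_edge_01: "cmor 1 M E \<Longrightarrow> rest 1 (E \<circ> edge {} {1}) = E"
  using rest1_comp_eq_edge[OF cmor_edge_01, of M E] cmor1_eq_edge[of M E] by simp

lemma cmor_face: "1 \<le> j \<Longrightarrow> j \<le> Suc m \<Longrightarrow> cmor m (Suc m) (rest m (face j d))"
proof -
  assume "1 \<le> j" "j \<le> Suc m"
  moreover have "rest m (face j d \<circ> rest m id) = rest m (face j d)" by (auto simp: rest_def fun_eq_iff)
  ultimately show ?thesis using cmor.cface[OF cmor.cid[of m], of j d] by simp
qed

lemma inj_face: "inj (face j d)"
proof (rule injI)
  fix A B assume h: "face j d A = face j d B"
  have "A = {x. (x < j \<and> x \<in> face j d A) \<or> (j \<le> x \<and> Suc x \<in> face j d A)}" for A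
    by (auto simp: face_def)
  then show "A = B" using h by metis
qed

lemma face_degen: "j \<ge> 1 \<Longrightarrow> face j (j \<in> A) (degen j A) = A"
proof (rule set_eqI)
  fix x assume j: "j \<ge> 1"
  show "x \<in> face j (j \<in> A) (degen j A) \<longleftrightarrow> x \<in> A"
  proof (cases "x \<le> j")
    case True
    then show ?thesis by (cases "x = j") (auto simp: face_def degen_def)
  next
    case False
    then obtain y where y: "x = Suc y" "y \<ge> j" by (cases x) auto
    then have "x \<in> face j (j \<in> A) (degen j A) \<longleftrightarrow> y \<in> degen j A"
      by (auto simp: face_def)
    also have "\<dots> \<longleftrightarrow> x \<in> A"
      using y j by (auto simp: degen_def image_iff)
    finally show ?thesis .
  qed
qed

lemma degen_insert: "j \<noteq> i \<Longrightarrow> degen i (insert j u) = insert (if j < i then j else j - 1) (degen i u)"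
  by (auto simp: degen_def)

lemma degen_notin: "j \<noteq> i \<Longrightarrow> j \<notin> u \<Longrightarrow> (if j < i then j else j - 1) \<notin> degen i u"
proof
  assume h: "j \<noteq> i" "j \<notin> u" "(if j < i then j else j - 1) \<in> degen i u"
  show False
  proof (cases "j < i")
    case True then show False using h by (auto simp: degen_def)
  next
    case False
    then have j: "j - 1 \<in> degen i u" "i < j" using h by auto
    then obtain x where x: "x \<in> u" "(x < i \<and> x = j - 1) \<or> (i < x \<and> x - 1 = j - 1)" unfolding degen_def by auto
    show False
    proof (cases "x < i \<and> x = j - 1")
      case True then show False using j(2) by linarith
    next
      case False
      then have "x = j" using x(2) j(2) by linarith
      then show False using h(2) x(1) by simp
    qed
  qed
qed

lemma cmor_edge_insert:
  "1 \<le> m \<Longrightarrow> j \<in> {1..m} \<Longrightarrow> u \<subseteq> {1..m} \<Longrightarrow> j \<notin> u \<Longrightarrow> cmor 1 m (edge u (insert j u))"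
proof (induction m arbitrary: j u rule: nat_induct_at_least)
  case base
  then have "j = 1" "u = {}" by auto
  then show ?case using cmor_edge_01 by simp
next
  case (Suc m)
  define i :: nat where "i = (if j = 1 then 2 else 1)"
  have ij: "j \<noteq> i" "1 \<le> i" "i \<le> Suc m" using Suc.prems Suc.hyps by (auto simp: i_def)
  define j' where "j' = (if j < i then j else j - 1)"
  have j': "j' \<in> {1..m}" using Suc.prems ij by (auto simp: j'_def)
  have u': "degen i u \<subseteq> {1..m}" using degen_range[OF Suc.prems(2) ij(2,3)] .
  have nj: "j' \<notin> degen i u" using degen_notin[OF ij(1) Suc.prems(3)] by (simp add: j'_def)
  have ins: "degen i (insert j u) = insert j' (degen i u)" using degen_insert[OF ij(1)] by (simp add: j'_def)
  have "face i (i \<in> u) (degen i u) = u" "face i (i \<in> u) (insert j' (degen i u)) = insert j u"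
    using face_degen[OF ij(2), of u] face_degen[OF ij(2), of "insert j u"] ins ij(1) by simp_all
  then have "rest 1 (face i (i \<in> u) \<circ> edge (degen i u) (insert j' (degen i u))) = edge u (insert j u)"
    by (auto simp: rest_def edge_def fun_eq_iff)
  then show ?case using cmor.cface[OF Suc.IH[OF j' u' nj] ij(2,3), of "i \<in> u"] by simp
qed

section \<open>Paths in a cube\<close>

lemma is_path_Nil [simp]: "is_path N u w [] \<longleftrightarrow> u = w \<and> u \<subseteq> {1..N}"
  by (auto simp: is_path_def)

lemma is_path_Cons: "is_path N u w (x # es) \<longleftrightarrow>
   cmor 1 N x \<and> x {} = u \<and> u \<subseteq> {1..N} \<and> is_path N (x {1}) w es"
proof (cases "es = []")
  case True
  then show ?thesis using cmor_range[of 1 N x "{1}"] by (auto simp: is_path_def)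
next
  case False
  have idx: "(\<forall>j. Suc j < length (x # es) \<longrightarrow> ((x # es) ! j) {1} = ((x # es) ! Suc j) {}) \<longleftrightarrow>
     x {1} = hd es {} \<and> (\<forall>j. Suc j < length es \<longrightarrow> (es ! j) {1} = (es ! Suc j) {})"
  proof
    assume h: "\<forall>j. Suc j < length (x # es) \<longrightarrow> ((x # es) ! j) {1} = ((x # es) ! Suc j) {}"
    have "x {1} = hd es {}" using h[rule_format, of 0] False by (simp add: hd_conv_nth)
    moreover have "\<forall>j. Suc j < length es \<longrightarrow> (es ! j) {1} = (es ! Suc j) {}"
      using h by (metis Suc_mono length_Cons nth_Cons_Suc)
    ultimately show "x {1} = hd es {} \<and> (\<forall>j. Suc j < length es \<longrightarrow> (es ! j) {1} = (es ! Suc j) {})" by blast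
  next
    assume h: "x {1} = hd es {} \<and> (\<forall>j. Suc j < length es \<longrightarrow> (es ! j) {1} = (es ! Suc j) {})"
    show "\<forall>j. Suc j < length (x # es) \<longrightarrow> ((x # es) ! j) {1} = ((x # es) ! Suc j) {}"
    proof (intro allI impI)
      fix j assume "Suc j < length (x # es)"
      then show "((x # es) ! j) {1} = ((x # es) ! Suc j) {}"
        using h False by (cases j) (auto simp: hd_conv_nth)
    qed
  qed
  show ?thesis
    using False cmor_range[of 1 N x "{1}"] hd_in_set[OF False]
    unfolding is_path_def idx by (auto simp: last.simps)
qed

lemma is_path_append: "is_path N u w (A @ B) \<longleftrightarrow> (\<exists>v. is_path N u v A \<and> is_path N v w B)"
proof (induction A arbitrary: u)
  case Nil
  have "is_path N u w B \<Longrightarrow> u \<subseteq> {1..N}"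
    by (cases B) (auto simp: is_path_Cons)
  then show ?case by auto
next
  case (Cons x A)
  then show ?case by (auto simp: is_path_Cons)
qed

lemma is_path_endpoints: "is_path N u w es \<Longrightarrow> u \<subseteq> {1..N} \<and> w \<subseteq> {1..N}"
  by (simp add: is_path_def)

lemma is_path_monotone: "is_path N u w es \<Longrightarrow> u \<subseteq> w \<and> (\<forall>e\<in>set es. u \<subseteq> e {} \<and> e {} \<subseteq> e {1} \<and> e {1} \<subseteq> w)"
proof (induction es arbitrary: u)
  case Nil then show ?case by simp
next
  case (Cons x es)
  then have x: "cmor 1 N x" "x {} = u" "is_path N (x {1}) w es" by (auto simp: is_path_Cons)
  have m: "x {} \<subseteq> x {1}" using cmor1_mono[OF x(1)] .
  note IH = Cons.IH[OF x(3)]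
  have "u \<subseteq> w" using IH m x(2) by (meson order_trans)
  moreover have "\<forall>e\<in>set (x # es). u \<subseteq> e {} \<and> e {} \<subseteq> e {1} \<and> e {1} \<subseteq> w"
  proof
    fix e assume "e \<in> set (x # es)"
    then consider "e = x" | "e \<in> set es" by auto
    then show "u \<subseteq> e {} \<and> e {} \<subseteq> e {1} \<and> e {1} \<subseteq> w"
    proof cases
      case 1 then show ?thesis using IH m x(2) by (meson order_trans order_refl)
    next
      case 2 then show ?thesis using IH m x(2) by (meson order_trans)
    qed
  qed
  ultimately show ?case by blast
qed

definition map_path :: "vmap \<Rightarrow> vmap list \<Rightarrow> vmap list" where
  "map_path g es = map (\<lambda>e. rest 1 (g \<circ> e)) es"

lemma map_path_simps [simp]:
  "map_path g [] = []" "map_path g (x # es) = rest 1 (g \<circ> x) # map_path g es"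
  "map_path g (A @ B) = map_path g A @ map_path g B"
  by (auto simp: map_path_def)

lemma is_path_map_path: "cmor N M g \<Longrightarrow> is_path N u w es \<Longrightarrow> is_path M (g u) (g w) (map_path g es)"
proof (induction es arbitrary: u)
  case Nil
  then have "u = w" "u \<subseteq> {1..N}" by auto
  then show ?case using cmor_range[OF Nil(1), of u] by simp
next
  case (Cons x es)
  then have x: "cmor 1 N x" "x {} = u" "u \<subseteq> {1..N}" "is_path N (x {1}) w es"
    by (auto simp: is_path_Cons)
  show ?case using Cons.IH[OF Cons(2) x(4)] x cmor_comp[OF Cons(2) x(1)] cmor_range[OF Cons(2) x(3)]
    by (simp add: is_path_Cons)
qed

lemma pequiv_remove_const:
  assumes "is_path N u w (ps @ [rest 1 (\<lambda>_. v)] @ qs)"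
  shows "(ps @ [rest 1 (\<lambda>_. v)] @ qs, ps @ qs) \<in> pequiv N u w" "is_path N u w (ps @ qs)"
proof -
  have cv: "rest 1 (\<lambda>_. v) {} = v" "rest 1 (\<lambda>_. v) {1} = v" by (auto simp: rest_def)
  from assms obtain v1 v2 where "is_path N u v1 ps" "is_path N v1 v2 [rest 1 (\<lambda>_. v)]" "is_path N v2 w qs"
    unfolding is_path_append by blast
  then show p: "is_path N u w (ps @ qs)" using cv by (auto simp: is_path_append is_path_Cons)
  have "(ps @ qs, ps @ [rest 1 (\<lambda>_. v)] @ qs) \<in> pins N u w"
    unfolding pins_def using p assms by blast
  then show "(ps @ [rest 1 (\<lambda>_. v)] @ qs, ps @ qs) \<in> pequiv N u w"
    unfolding pequiv_def by blast
qed

definition nonconst :: "vmap \<Rightarrow> bool" where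
  "nonconst e \<longleftrightarrow> e {} \<noteq> e {1}"

lemma pequiv_filter_nonconst_append:
  "is_path N u w (ps @ qs) \<Longrightarrow>
     (ps @ qs, ps @ filter nonconst qs) \<in> pequiv N u w \<and> is_path N u w (ps @ filter nonconst qs)"
proof (induction qs arbitrary: ps)
  case Nil
  then show ?case by (simp add: pequiv_def)
next
  case (Cons q qs)
  show ?case
  proof (cases "nonconst q")
    case True
    then show ?thesis using Cons.IH[of "ps @ [q]"] Cons.prems by simp
  next
    case False
    have "cmor 1 N q" using Cons.prems by (auto simp: is_path_append is_path_Cons)
    then have "q = edge (q {}) (q {1})" by (rule cmor1_eq_edge)
    also have "\<dots> = rest 1 (\<lambda>_. q {})"
      using False by (simp add: nonconst_def edge_const)
    finally have qe: "q = rest 1 (\<lambda>_. q {})" .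
    have "is_path N u w (ps @ [rest 1 (\<lambda>_. q {})] @ qs)" using Cons.prems qe by simp
    note R = pequiv_remove_const[OF this]
    from Cons.IH[OF R(2)] R(1) qe False show ?thesis
      unfolding pequiv_def by (metis (no_types, lifting) append_Cons append_Nil filter.simps(2) rtrancl_trans)
  qed
qed

lemma pequiv_filter_nonconst:
  "is_path N u w es \<Longrightarrow> (es, filter nonconst es) \<in> pequiv N u w \<and> is_path N u w (filter nonconst es)"
  using pequiv_filter_nonconst_append[of N u w "[]" es] by simp

definition canon_path :: "nat set \<Rightarrow> nat set \<Rightarrow> vmap list" where
  "canon_path u w = (if u = w then [] else [edge u w])"

definition covers :: "nat set \<Rightarrow> nat set \<Rightarrow> bool" where
  "covers u w \<longleftrightarrow> (\<forall>v. u \<subseteq> v \<longrightarrow> v \<subseteq> w \<longrightarrow> v = u \<or> v = w)"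

lemma covers_refl [simp]: "covers u u"
  by (auto simp: covers_def)

lemma pequiv_canon_path:
  assumes p: "is_path N u w es" and cov: "covers u w"
  shows "(es, canon_path u w) \<in> pequiv N u w"
proof -
  note F = pequiv_filter_nonconst[OF p]
  have mono: "u \<subseteq> w" "\<forall>e\<in>set es. u \<subseteq> e {} \<and> e {} \<subseteq> e {1} \<and> e {1} \<subseteq> w"
    using is_path_monotone[OF p] by auto
  have full: "\<forall>e\<in>set (filter nonconst es). e {} = u \<and> e {1} = w \<and> u \<noteq> w"
  proof
    fix e assume "e \<in> set (filter nonconst es)"
    then have "e \<in> set es" "e {} \<noteq> e {1}" by (auto simp: nonconst_def)
    moreover have "e {} = u \<or> e {} = w" "e {1} = u \<or> e {1} = w"
      using cov mono calculation(1) unfolding covers_def by (meson order_trans)+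
    ultimately show "e {} = u \<and> e {1} = w \<and> u \<noteq> w" using mono(2) by blast
  qed
  have "filter nonconst es = canon_path u w"
  proof (cases "filter nonconst es")
    case Nil
    then show ?thesis using F by (auto simp: canon_path_def)
  next
    case (Cons x xs)
    then have x: "cmor 1 N x" "x = edge u w" "u \<noteq> w" "is_path N w w xs"
      using F full cmor1_eq_edge[of N x] by (auto simp: is_path_Cons)
    have "xs = []"
      using x(3,4) full Cons by (cases xs) (auto simp: is_path_Cons)
    then show ?thesis using Cons x by (simp add: canon_path_def)
  qed
  then show ?thesis using F by simp
qed

lemma covers_reflect:
  assumes F: "cmor M n F" "inj_on F (Pow {1..M})"
    and c: "c0 \<subseteq> c1" "c1 \<subseteq> {1..M}" and cov: "covers (F c0) (F c1)"
  shows "covers c0 c1"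
  unfolding covers_def
proof (intro allI impI)
  fix w assume w: "c0 \<subseteq> w" "w \<subseteq> c1"
  then have "F c0 \<subseteq> F w" "F w \<subseteq> F c1" using cmor_mono[OF F(1)] c by (meson order_trans)+
  then have "F w = F c0 \<or> F w = F c1" using cov by (simp add: covers_def)
  moreover have "w \<in> Pow {1..M}" "c0 \<in> Pow {1..M}" "c1 \<in> Pow {1..M}" using w c by auto
  ultimately show "w = c0 \<or> w = c1" using F(2) by (auto dest: inj_onD)
qed

lemma cmor_edge_covers:
  assumes "w \<subseteq> {1..M}" "u \<subset> w" "covers u w"
  shows "cmor 1 M (edge u w)"
proof -
  obtain j where j: "j \<in> w" "j \<notin> u" using assms(2) by blast
  have "insert j u = w" using assms j unfolding covers_def by blast
  moreover have "1 \<le> M" "j \<in> {1..M}" using assms(1) j by auto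
  ultimately show ?thesis using cmor_edge_insert[of M j u] assms(1) j by auto
qed

lemma rest1_const_comp: "rest 1 (g \<circ> rest 1 (\<lambda>_. v)) = rest 1 (\<lambda>_. g v)"
  by (auto simp: rest_def fun_eq_iff)

lemma rest1_face_comp:
  "j \<in> {1,2} \<Longrightarrow> rest 1 (g \<circ> rest 1 (s \<circ> face j d)) = rest 1 (rest 2 (g \<circ> s) \<circ> face j d)"
proof (rule ext)
  fix A assume "j \<in> {1,2}"
  then have "A \<subseteq> {1..1} \<Longrightarrow> face j d A \<subseteq> {1..2}" by (auto simp: face_def)
  then show "rest 1 (g \<circ> rest 1 (s \<circ> face j d)) A = rest 1 (rest 2 (g \<circ> s) \<circ> face j d) A"
    by (auto simp: rest_def)
qed

lemma pins_map_path:
  assumes g: "cmor N M g" and h: "(es, es') \<in> pins N u w"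
  shows "(map_path g es, map_path g es') \<in> pins M (g u) (g w)"
proof -
  from h obtain ps qs v where e: "es = ps @ qs" "es' = ps @ [rest 1 (\<lambda>_. v)] @ qs"
    and p: "is_path N u w es" "is_path N u w es'" unfolding pins_def by blast
  have "map_path g es' = map_path g ps @ [rest 1 (\<lambda>_. g v)] @ map_path g qs"
    using e by (simp add: rest1_const_comp)
  then show ?thesis
    unfolding pins_def using e is_path_map_path[OF g p(1)] is_path_map_path[OF g p(2)] by auto
qed

lemma pstep_map_path:
  assumes g: "cmor N M g" and h: "(es, es') \<in> pstep N u w"
  shows "(map_path g es, map_path g es') \<in> pstep M (g u) (g w)"
proof -
  from h obtain ps qs s where s: "cmor 2 N s" and
     e: "es = ps @ [rest 1 (s \<circ> face 1 False), rest 1 (s \<circ> face 2 True)] @ qs"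
        "es' = ps @ [rest 1 (s \<circ> face 2 False), rest 1 (s \<circ> face 1 True)] @ qs"
    and p: "is_path N u w es" "is_path N u w es'" unfolding pstep_def by blast
  define s' where "s' = rest 2 (g \<circ> s)"
  have s': "cmor 2 M s'" using cmor_comp[OF g s] s'_def by simp
  have "map_path g es = map_path g ps @ [rest 1 (s' \<circ> face 1 False), rest 1 (s' \<circ> face 2 True)] @ map_path g qs"
    "map_path g es' = map_path g ps @ [rest 1 (s' \<circ> face 2 False), rest 1 (s' \<circ> face 1 True)] @ map_path g qs"
    using e by (simp_all add: s'_def rest1_face_comp)
  then show ?thesis
    unfolding pstep_def using is_path_map_path[OF g p(1)] is_path_map_path[OF g p(2)] s' by blast
qed

lemma pequiv_map_path:
  assumes g: "cmor N M g" and h: "(es, es') \<in> pequiv N u w"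
  shows "(map_path g es, map_path g es') \<in> pequiv M (g u) (g w)"
  using h unfolding pequiv_def
proof (induction rule: rtrancl_induct)
  case base
  then show ?case by simp
next
  case (step y z)
  then have "(map_path g y, map_path g z) \<in> pins M (g u) (g w) \<union> (pins M (g u) (g w))\<inverse>"
    using pins_map_path[OF g] by blast
  then show ?case using step by (meson rtrancl.rtrancl_into_rtrancl)
qed

lemma pleq_map_path:
  assumes g: "cmor N M g" and h: "(es, es') \<in> pleq N u w"
  shows "(map_path g es, map_path g es') \<in> pleq M (g u) (g w)"
  using h unfolding pleq_def
proof (induction rule: rtrancl_induct)
  case base
  then show ?case by simp
next
  case (step y z)
  then have "(map_path g y, map_path g z) \<in> pequiv M (g u) (g w) \<union> pstep M (g u) (g w)"
    using pequiv_map_path[OF g] pstep_map_path[OF g] by blast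
  then show ?case using step by (meson rtrancl.rtrancl_into_rtrancl)
qed

lemma is_path_pequiv: "(es, es') \<in> pequiv N u w \<Longrightarrow> is_path N u w es \<Longrightarrow> is_path N u w es'"
  unfolding pequiv_def by (induction rule: rtrancl_induct) (auto simp: pins_def)

lemma nsimp_map_path:
  "cmor N M g \<Longrightarrow> nsimp N u w k gs \<Longrightarrow> nsimp M (g u) (g w) k (map (map_path g) gs)"
  unfolding nsimp_def using is_path_map_path pleq_map_path by auto

lemma nsimp_path: "nsimp N u w k gs \<Longrightarrow> g \<in> set gs \<Longrightarrow> is_path N u w g"
  by (simp add: nsimp_def)

lemma nsimp_endpoints: "nsimp N u w k gs \<Longrightarrow> u \<subseteq> {1..N} \<and> w \<subseteq> {1..N} \<and> u \<subseteq> w"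
proof -
  assume h: "nsimp N u w k gs"
  then obtain g where "g \<in> set gs" by (cases gs) (auto simp: nsimp_def)
  then have "is_path N u w g" using h nsimp_path by blast
  then show ?thesis using is_path_endpoints[of N u w g] is_path_monotone[of N u w g] by blast
qed

lemma nsimp_replicate: "is_path N u w p \<Longrightarrow> nsimp N u w k (replicate (Suc k) p)"
  unfolding nsimp_def pleq_def by (auto simp del: replicate_Suc simp add: nth_replicate)

lemma nsimp_canon_path:
  assumes ns: "nsimp N u w k gs" and cov: "covers u w"
  shows "list_all2 (\<lambda>g g'. (g, g') \<in> pequiv N u w) gs (replicate (Suc k) (canon_path u w))"
    and "nsimp N u w k (replicate (Suc k) (canon_path u w))"
proof -
  have l: "length gs = Suc k" using ns by (simp add: nsimp_def)
  have pe: "\<forall>g\<in>set gs. (g, canon_path u w) \<in> pequiv N u w"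
    using pequiv_canon_path[OF _ cov] nsimp_path[OF ns] by blast
  with l show "list_all2 (\<lambda>g g'. (g, g') \<in> pequiv N u w) gs (replicate (Suc k) (canon_path u w))"
    by (auto simp del: replicate_Suc simp add: list_all2_conv_all_nth nth_replicate)
  obtain g where "g \<in> set gs" using l by (cases gs) auto
  then have "is_path N u w (canon_path u w)" using pe ns is_path_pequiv nsimp_path by blast
  then show "nsimp N u w k (replicate (Suc k) (canon_path u w))" by (rule nsimp_replicate)
qed

section \<open>Chains of generators and the colimit relation\<close>

definition vertices_closed :: "'a cset \<Rightarrow> bool" where
  "vertices_closed S \<longleftrightarrow> (\<forall>k d. dvalid S k d \<longrightarrow> dsrc S d \<in> cells S 0 \<and> dtgt S d \<in> cells S 0)"

lemma vertices_closedD: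
  "vertices_closed S \<Longrightarrow> dvalid S k d \<Longrightarrow> dsrc S d \<in> cells S 0 \<and> dtgt S d \<in> cells S 0"
  unfolding vertices_closed_def by blast

lemma cvalid_Nil [simp]: "cvalid S k a b [] \<longleftrightarrow> a = b \<and> a \<in> cells S 0"
  by (auto simp: cvalid_def)

lemma cvalid_Cons:
  assumes S: "vertices_closed S"
  shows "cvalid S k a b (d # ds) \<longleftrightarrow> dvalid S k d \<and> dsrc S d = a \<and> cvalid S k (dtgt S d) b ds"
proof (cases ds)
  case Nil
  then show ?thesis using vertices_closedD[OF S, of k d] by (auto simp: cvalid_def)
next
  case (Cons d' ds')
  have "(\<forall>j. Suc j < length (d # ds) \<longrightarrow> dtgt S ((d # ds) ! j) = dsrc S ((d # ds) ! Suc j)) \<longleftrightarrow>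
     dtgt S d = dsrc S d' \<and> (\<forall>j. Suc j < length ds \<longrightarrow> dtgt S (ds ! j) = dsrc S (ds ! Suc j))"
    by (auto simp: Cons less_Suc_eq_0_disj)
  then show ?thesis
    using Cons vertices_closedD[OF S, of k d] unfolding cvalid_def by auto
qed

lemma cvalid_single:
  "vertices_closed S \<Longrightarrow> cvalid S k c d [x] \<longleftrightarrow> dvalid S k x \<and> dsrc S x = c \<and> dtgt S x = d"
  by (auto simp: cvalid_Cons dest: vertices_closedD)

lemma cvalid_cells: "cvalid S k a b X \<Longrightarrow> a \<in> cells S 0 \<and> b \<in> cells S 0"
  by (simp add: cvalid_def)

lemma cvalid_dvalid: "cvalid S k a b X \<Longrightarrow> \<forall>d\<in>set X. dvalid S k d"
  by (simp add: cvalid_def)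

lemma cvalid_hd_last: "cvalid S k a b X \<Longrightarrow> X \<noteq> [] \<Longrightarrow> a = dsrc S (hd X) \<and> b = dtgt S (last X)"
  by (simp add: cvalid_def)

lemma cvalid_append:
  assumes "vertices_closed S"
  shows "cvalid S k a b (X @ Y) \<longleftrightarrow> (\<exists>c. cvalid S k a c X \<and> cvalid S k c b Y)"
proof (induction X arbitrary: a)
  case Nil
  then show ?case using cvalid_cells by fastforce
next
  case (Cons d X)
  then show ?case by (auto simp: cvalid_Cons[OF assms])
qed

lemma ceq_refl [simp]: "(x, x) \<in> ceq S k"
  by (simp add: ceq_def)

lemma ceq_sym: "(x, y) \<in> ceq S k \<Longrightarrow> (y, x) \<in> ceq S k"
proof -
  assume "(x, y) \<in> ceq S k"
  then have "(y, x) \<in> ((crel S k \<union> (crel S k)\<inverse>)\<inverse>)\<^sup>*"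
    unfolding ceq_def by (rule rtrancl_converseI)
  moreover have "(crel S k \<union> (crel S k)\<inverse>)\<inverse> = crel S k \<union> (crel S k)\<inverse>" by auto
  ultimately show ?thesis unfolding ceq_def by simp
qed

lemma ceq_trans: "(x, y) \<in> ceq S k \<Longrightarrow> (y, z) \<in> ceq S k \<Longrightarrow> (x, z) \<in> ceq S k"
  unfolding ceq_def by (rule rtrancl_trans)

lemma ceq_rtrancl [simp]: "(ceq S k)\<^sup>* = ceq S k"
  unfolding ceq_def by simp

lemma ceq_Image_eq_iff: "ceq S k `` {x} = ceq S k `` {y} \<longleftrightarrow> (x, y) \<in> ceq S k"
  by (auto intro: ceq_sym ceq_trans)

lemma basic_pequivI:
  "list_all2 (\<lambda>g g'. (g, g') \<in> pequiv N u w) gs gs' \<Longrightarrow>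
     ([(N, x, u, w, gs)], [(N, x, u, w, gs')]) \<in> basic S k"
  unfolding basic_def by (intro UnI1) blast

lemma basic_transportI:
  "cmor M N f \<Longrightarrow> x \<in> cells S N \<Longrightarrow>
     ([(M, act S M N f x, u, w, gs)], [(N, x, f u, f w, map (map_path f) gs)]) \<in> basic S k"
  unfolding basic_def map_path_def[abs_def] by (rule UnI1, rule UnI1, rule UnI2) blast

lemma basic_composeI: "([(N, x, u, v, gs), (N, x, v, w, hs)], [(N, x, u, w, map2 (@) gs hs)]) \<in> basic S k"
  unfolding basic_def by (rule UnI1, rule UnI2) blast

lemma basic_unitI: "([(N, x, u, u, replicate (Suc k) [])], []) \<in> basic S k"
  unfolding basic_def by (rule UnI2) blast

lemma basic_cases:
  assumes "(l, r) \<in> basic S k"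
  obtains (pequiv) N x u w gs gs' where "l = [(N, x, u, w, gs)]" "r = [(N, x, u, w, gs')]"
      "list_all2 (\<lambda>g g'. (g, g') \<in> pequiv N u w) gs gs'"
  | (transport) M N f x u w gs where "l = [(M, act S M N f x, u, w, gs)]"
      "r = [(N, x, f u, f w, map (map_path f) gs)]" "cmor M N f" "x \<in> cells S N"
  | (compose) N x u v w gs hs where "l = [(N, x, u, v, gs), (N, x, v, w, hs)]"
      "r = [(N, x, u, w, map2 (@) gs hs)]"
  | (unit) N x u where "l = [(N, x, u, u, replicate (Suc k) [])]" "r = []"
  using assms unfolding basic_def map_path_def[abs_def]
  by (elim UnE; simp only: mem_Collect_eq; elim exE conjE; simp only: prod.inject)

lemma crel_cases:
  assumes "(Z, Z') \<in> crel S k"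
  obtains D l r E where "Z = D @ l @ E" "Z' = D @ r @ E" "(l, r) \<in> basic S k"
  using assms unfolding crel_def by blast

lemma crelI:
  "(l, r) \<in> basic S k \<Longrightarrow> cvalid S k a b (D @ l @ E) \<Longrightarrow> cvalid S k a b (D @ r @ E) \<Longrightarrow>
     (D @ l @ E, D @ r @ E) \<in> crel S k"
  unfolding crel_def by blast

lemma cvalid_crel:
  assumes "(Z, Z') \<in> crel S k \<or> (Z', Z) \<in> crel S k" "cvalid S k a b Z" "a \<noteq> b"
  shows "cvalid S k a b Z'"
proof -
  from assms(1) obtain a' b' where v: "cvalid S k a' b' Z" "cvalid S k a' b' Z'"
    unfolding crel_def by blast
  have "Z \<noteq> []" using assms(2,3) by auto
  then have "a' = a" "b' = b" using cvalid_hd_last[OF v(1)] cvalid_hd_last[OF assms(2)] by auto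
  then show ?thesis using v by simp
qed

text \<open>The hypothesis \<open>a \<noteq> b\<close> excludes the empty chain, which is valid from any vertex to itself;
  hence no elementary step can move the end points.\<close>

lemma ceq_invariant:
  assumes "(X, Y) \<in> ceq S k" "cvalid S k a b X" "a \<noteq> b"
    and inv: "\<And>Z Z'. cvalid S k a b Z \<Longrightarrow> cvalid S k a b Z' \<Longrightarrow> (Z, Z') \<in> crel S k \<Longrightarrow>
        (F Z, F Z') \<in> R \<and> (F Z', F Z) \<in> R"
  shows "(F X, F Y) \<in> R\<^sup>* \<and> cvalid S k a b Y"
  using assms(1) unfolding ceq_def
proof (induction rule: rtrancl_induct)
  case base
  then show ?case using assms(2) by simp
next
  case (step y z)
  then have vy: "cvalid S k a b y" by blast
  have vz: "cvalid S k a b z" using cvalid_crel[OF _ vy assms(3)] step(2) by blast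
  have "(F y, F z) \<in> R" using step(2) inv[OF vy vz] inv[OF vz vy] by blast
  then show ?case using step vz by (meson rtrancl.rtrancl_into_rtrancl)
qed

text \<open>The elementary steps of \<open>ceq\<close> must keep the whole chain valid, so \<open>ceq\<close> is not
  visibly a congruence for concatenation; \<open>ctx_eq\<close> is the congruence used instead.\<close>

definition ctx_eq :: "'a cset \<Rightarrow> nat \<Rightarrow> 'a \<Rightarrow> 'a \<Rightarrow> 'a datum list \<Rightarrow> 'a datum list \<Rightarrow> bool" where
  "ctx_eq S k c d X Y \<longleftrightarrow> cvalid S k c d X \<and> cvalid S k c d Y \<and>
     (\<forall>P Q a b. cvalid S k a c P \<longrightarrow> cvalid S k d b Q \<longrightarrow> (P @ X @ Q, P @ Y @ Q) \<in> ceq S k)"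

lemma ctx_eq_refl: "cvalid S k c d X \<Longrightarrow> ctx_eq S k c d X X"
  by (simp add: ctx_eq_def)

lemma ctx_eq_sym: "ctx_eq S k c d X Y \<Longrightarrow> ctx_eq S k c d Y X"
  by (auto simp: ctx_eq_def intro: ceq_sym)

lemma ctx_eq_trans: "ctx_eq S k c d X Y \<Longrightarrow> ctx_eq S k c d Y Z \<Longrightarrow> ctx_eq S k c d X Z"
  unfolding ctx_eq_def by (meson ceq_trans)

lemma ctx_eq_imp_ceq: "ctx_eq S k c d X Y \<Longrightarrow> (X, Y) \<in> ceq S k"
  unfolding ctx_eq_def by (metis append.left_neutral append.right_neutral cvalid_Nil cvalid_cells)

lemma ctx_eq_cvalid: "ctx_eq S k c d X Y \<Longrightarrow> cvalid S k c d X \<and> cvalid S k c d Y"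
  by (simp add: ctx_eq_def)

lemma ctx_eq_basic:
  assumes S: "vertices_closed S" and b: "(l, r) \<in> basic S k"
    and v: "cvalid S k c d l" "cvalid S k c d r"
  shows "ctx_eq S k c d l r"
  unfolding ctx_eq_def
proof (intro conjI allI impI)
  fix P Q a b assume "cvalid S k a c P" "cvalid S k d b Q"
  then have "cvalid S k a b (P @ l @ Q)" "cvalid S k a b (P @ r @ Q)"
    using v by (auto simp: cvalid_append[OF S])
  then show "(P @ l @ Q, P @ r @ Q) \<in> ceq S k"
    using crelI[OF b] unfolding ceq_def by blast
qed (use v in auto)

lemma ctx_eq_append_right:
  assumes S: "vertices_closed S" and h: "ctx_eq S k c d X Y" and Q: "cvalid S k d e Q"
  shows "ctx_eq S k c e (X @ Q) (Y @ Q)"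
  unfolding ctx_eq_def
proof (intro conjI allI impI)
  show "cvalid S k c e (X @ Q)" "cvalid S k c e (Y @ Q)"
    using h Q by (auto simp: ctx_eq_def cvalid_append[OF S])
  fix P' Q' a b assume P': "cvalid S k a c P'" and Q': "cvalid S k e b Q'"
  have "cvalid S k d b (Q @ Q')" using Q Q' by (auto simp: cvalid_append[OF S])
  then have "(P' @ X @ Q @ Q', P' @ Y @ Q @ Q') \<in> ceq S k"
    using h P' unfolding ctx_eq_def by blast
  then show "(P' @ (X @ Q) @ Q', P' @ (Y @ Q) @ Q') \<in> ceq S k" by simp
qed

lemma ctx_eq_append_left:
  assumes S: "vertices_closed S" and P: "cvalid S k e c P" and h: "ctx_eq S k c d X Y"
  shows "ctx_eq S k e d (P @ X) (P @ Y)"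
  unfolding ctx_eq_def
proof (intro conjI allI impI)
  show "cvalid S k e d (P @ X)" "cvalid S k e d (P @ Y)"
    using h P by (auto simp: ctx_eq_def cvalid_append[OF S])
  fix P' Q' a b assume P': "cvalid S k a e P'" and Q': "cvalid S k d b Q'"
  have "cvalid S k a c (P' @ P)" using P P' by (auto simp: cvalid_append[OF S])
  then have "((P' @ P) @ X @ Q', (P' @ P) @ Y @ Q') \<in> ceq S k"
    using h Q' unfolding ctx_eq_def by blast
  then show "(P' @ (P @ X) @ Q', P' @ (P @ Y) @ Q') \<in> ceq S k" by simp
qed

lemma ctx_eq_context:
  "vertices_closed S \<Longrightarrow> ctx_eq S k c d X Y \<Longrightarrow> cvalid S k a c P \<Longrightarrow> cvalid S k d b Q \<Longrightarrow>
     ctx_eq S k a b (P @ X @ Q) (P @ Y @ Q)"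
  using ctx_eq_append_left ctx_eq_append_right by (metis append.assoc)

lemma ctx_eq_canon_datum:
  assumes S: "vertices_closed S" and d: "dvalid S k (N, x, u, w, gs)" and cov: "covers u w"
  shows "ctx_eq S k (vert S N x u) (vert S N x w) [(N, x, u, w, gs)] [(N, x, u, w, replicate (Suc k) (canon_path u w))]"
proof -
  have ns: "nsimp N u w k gs" using d by simp
  show ?thesis
    using ctx_eq_basic[OF S basic_pequivI[OF nsimp_canon_path(1)[OF ns cov]]]
      nsimp_canon_path(2)[OF ns cov] d by (simp add: cvalid_single[OF S])
qed

lemma ctx_eq_loop_datum:
  assumes S: "vertices_closed S" and d: "dvalid S k (N, x, u, u, gs)"
  shows "ctx_eq S k (vert S N x u) (vert S N x u) [(N, x, u, u, gs)] []"
proof -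
  have C: "ctx_eq S k (vert S N x u) (vert S N x u) [(N, x, u, u, gs)] [(N, x, u, u, replicate (Suc k) [])]"
    using ctx_eq_canon_datum[OF S d covers_refl] by (simp add: canon_path_def)
  then have v: "cvalid S k (vert S N x u) (vert S N x u) [(N, x, u, u, replicate (Suc k) [])]"
    by (simp add: ctx_eq_def)
  have "ctx_eq S k (vert S N x u) (vert S N x u) [(N, x, u, u, replicate (Suc k) [])] []"
    using ctx_eq_basic[OF S basic_unitI v] v cvalid_cells by fastforce
  then show ?thesis using ctx_eq_trans[OF C] by blast
qed

lemma ctx_eq_edge_datum:
  assumes S: "vertices_closed S" and E: "cmor 1 M E" and x: "x \<in> cells S M"
    and v: "cvalid S k c d [(1, act S 1 M E x, {}, {1}, replicate (Suc k) [edge {} {1}])]"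
      "cvalid S k c d [(M, x, E {}, E {1}, replicate (Suc k) [E])]"
  shows "ctx_eq S k c d [(1, act S 1 M E x, {}, {1}, replicate (Suc k) [edge {} {1}])]
           [(M, x, E {}, E {1}, replicate (Suc k) [E])]"
  using ctx_eq_basic[OF S basic_transportI[OF E x] v(1)] v(2) rest1_comp_edge_01[OF E]
  by (simp del: replicate_Suc)

lemma ctx_eq_covering_datum:
  assumes S: "vertices_closed S" and d: "dvalid S k (M, x, u, w, gs)" and cov: "covers u w"
    and v: "u \<noteq> w \<Longrightarrow> cvalid S k (vert S M x u) (vert S M x w)
              [(1, act S 1 M (edge u w) x, {}, {1}, replicate (Suc k) [edge {} {1}])]"
  shows "ctx_eq S k (vert S M x u) (vert S M x w) [(M, x, u, w, gs)]
           (if u = w then [] else [(1, act S 1 M (edge u w) x, {}, {1}, replicate (Suc k) [edge {} {1}])])"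
proof (cases "u = w")
  case True
  then show ?thesis using ctx_eq_loop_datum[OF S] d by simp
next
  case False
  have C: "ctx_eq S k (vert S M x u) (vert S M x w) [(M, x, u, w, gs)] [(M, x, u, w, replicate (Suc k) [edge u w])]"
    using ctx_eq_canon_datum[OF S d cov] False by (simp add: canon_path_def)
  have "u \<subseteq> w" "w \<subseteq> {1..M}" using nsimp_endpoints[of M u w k gs] d by auto
  then have E: "cmor 1 M (edge u w)" using cmor_edge_covers[OF _ _ cov] False by blast
  have "cvalid S k (vert S M x u) (vert S M x w) [(M, x, edge u w {}, edge u w {1}, replicate (Suc k) [edge u w])]"
    using ctx_eq_cvalid[OF C] by simp
  then have "ctx_eq S k (vert S M x u) (vert S M x w)
      [(1, act S 1 M (edge u w) x, {}, {1}, replicate (Suc k) [edge {} {1}])] [(M, x, u, w, replicate (Suc k) [edge u w])]"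
    using ctx_eq_edge_datum[OF S E _ v[OF False]] d by simp
  then show ?thesis using ctx_eq_trans[OF C ctx_eq_sym] False by simp
qed

section \<open>Subcomplexes of a cube containing the critical edge\<close>

fun src_vtx :: "vmap datum \<Rightarrow> nat set" where
  "src_vtx (N, y, u, w, gs) = y u"

fun tgt_vtx :: "vmap datum \<Rightarrow> nat set" where
  "tgt_vtx (N, y, u, w, gs) = y w"

text \<open>The assumption \<open>factor\<close> says that every cell is a degeneracy of a cell that is injective
  on vertices, i.e. of a face of the cube.\<close>

locale cube_subcomplex =
  fixes S :: "vmap cset" and n i :: nat and e :: bool
  assumes i_range: "1 \<le> i" "i \<le> n"
    and cells_cmor: "x \<in> cells S m \<Longrightarrow> cmor m n x"
    and act_eq: "act S = (\<lambda>m m' f x. rest m (x \<circ> f))"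
    and cells_closed: "x \<in> cells S N \<Longrightarrow> cmor M N f \<Longrightarrow> rest M (x \<circ> f) \<in> cells S M"
    and crit_cell: "crit n i e \<in> cells S 1"
    and vtx_cell: "v \<subseteq> {1..n} \<Longrightarrow> vtx v \<in> cells S 0"
    and factor: "y \<in> cells S N \<Longrightarrow>
      \<exists>M F g. F \<in> cells S M \<and> cmor N M g \<and> y = rest N (F \<circ> g) \<and> inj_on F (Pow {1..M})"
begin

definition crit_src :: "nat set" where
  "crit_src = (if e then {} else {1..n} - {i})"

definition crit_tgt :: "nat set" where
  "crit_tgt = (if e then {i} else {1..n})"

lemma crit_eq_edge: "crit n i e = edge crit_src crit_tgt"
  by (auto simp: crit_def edge_def crit_src_def crit_tgt_def)

lemma crit_src_tgt:
  "crit_src \<subseteq> {1..n}" "crit_tgt \<subseteq> {1..n}" "crit_tgt = insert i crit_src" "i \<notin> crit_src"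
  "crit_src \<noteq> crit_tgt"
proof -
  show "crit_src \<subseteq> {1..n}" "i \<notin> crit_src" by (auto simp: crit_src_def)
  show "crit_tgt \<subseteq> {1..n}" using i_range by (auto simp: crit_tgt_def)
  show "crit_tgt = insert i crit_src" unfolding crit_src_def crit_tgt_def using i_range by (cases e) auto
  then show "crit_src \<noteq> crit_tgt" using \<open>i \<notin> crit_src\<close> by auto
qed

lemma covers_crit: "covers crit_src crit_tgt"
  unfolding covers_def crit_src_tgt(3) by blast

definition collapsed_vtx :: "nat set \<Rightarrow> bool" where
  "collapsed_vtx v \<longleftrightarrow> v = crit_src \<or> v = crit_tgt"

definition collapsed_datum :: "vmap datum \<Rightarrow> bool" where
  "collapsed_datum d \<longleftrightarrow> collapsed_vtx (src_vtx d) \<and> collapsed_vtx (tgt_vtx d)"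

definition bridgeable :: "nat set \<Rightarrow> nat set \<Rightarrow> bool" where
  "bridgeable p s \<longleftrightarrow> p = s \<or> (p = crit_src \<and> s = crit_tgt)"

definition crit_datum :: "nat \<Rightarrow> vmap datum" where
  "crit_datum k = (1, crit n i e, {}, {1}, replicate (Suc k) [edge {} {1}])"

definition bridge :: "nat \<Rightarrow> nat set \<Rightarrow> nat set \<Rightarrow> vmap datum list" where
  "bridge k p s = (if p = s then [] else [crit_datum k])"

lemma bridgeable_refl [simp]: "bridgeable p p"
  by (simp add: bridgeable_def)

lemma bridgeable_trans: "bridgeable p t \<Longrightarrow> bridgeable t s \<Longrightarrow> bridgeable p s"
  using crit_src_tgt by (auto simp: bridgeable_def)

lemma bridgeable_covers: "bridgeable p s \<Longrightarrow> covers p s"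
  using covers_crit by (auto simp: bridgeable_def)

lemma bridgeable_collapsed: "collapsed_vtx p \<Longrightarrow> collapsed_vtx t \<Longrightarrow> p \<subseteq> t \<Longrightarrow> bridgeable p t"
  using crit_src_tgt by (auto simp: collapsed_vtx_def bridgeable_def)

lemma bridge_same [simp]: "bridge k p p = []"
  by (simp add: bridge_def)

lemma bridge_append: "bridgeable p t \<Longrightarrow> bridgeable t s \<Longrightarrow> bridge k p t @ bridge k t s = bridge k p s"
  using crit_src_tgt by (auto simp: bridge_def bridgeable_def)

lemma act_S [simp]: "act S m m' f x = rest m (x \<circ> f)"
  by (simp add: act_eq)

lemma vert_S [simp]: "vert S N x u = vtx (x u)"
  by (auto simp: vert_def vtx_def rest_def fun_eq_iff)

lemma dvalid_S_vertices:
  assumes "dvalid S k d"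
  shows "src_vtx d \<subseteq> tgt_vtx d" "tgt_vtx d \<subseteq> {1..n}" "dsrc S d = vtx (src_vtx d)" "dtgt S d = vtx (tgt_vtx d)"
proof -
  obtain N y u w gs where d: "d = (N, y, u, w, gs)" by (cases d)
  have y: "cmor N n y" and ns: "nsimp N u w k gs" using assms d cells_cmor by auto
  note uw = nsimp_endpoints[OF ns]
  show "src_vtx d \<subseteq> tgt_vtx d" using cmor_mono[OF y] uw d by simp
  show "tgt_vtx d \<subseteq> {1..n}" using cmor_range[OF y] uw d by simp
  show "dsrc S d = vtx (src_vtx d)" "dtgt S d = vtx (tgt_vtx d)" using d by simp_all
qed

lemma vertices_closed_S: "vertices_closed S"
  unfolding vertices_closed_def
proof (intro allI impI)
  fix k d assume d: "dvalid S k d"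
  then have "src_vtx d \<subseteq> {1..n}" "tgt_vtx d \<subseteq> {1..n}" using dvalid_S_vertices by blast+
  then show "dsrc S d \<in> cells S 0 \<and> dtgt S d \<in> cells S 0" using vtx_cell d dvalid_S_vertices by simp
qed

lemma cvalid_single_S: "dvalid S k d \<Longrightarrow> cvalid S k (vtx (src_vtx d)) (vtx (tgt_vtx d)) [d]"
  using dvalid_S_vertices by (simp add: cvalid_single[OF vertices_closed_S])

lemma crit_datum_valid:
  "dvalid S k (crit_datum k)" "src_vtx (crit_datum k) = crit_src" "tgt_vtx (crit_datum k) = crit_tgt"
proof -
  have "is_path 1 {} {1} [edge {} {1}]" using cmor_edge_01 by (simp add: is_path_Cons)
  then show "dvalid S k (crit_datum k)"
    using crit_cell by (simp add: crit_datum_def nsimp_replicate del: replicate_Suc)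
  show "src_vtx (crit_datum k) = crit_src" "tgt_vtx (crit_datum k) = crit_tgt"
    by (simp_all add: crit_datum_def crit_eq_edge)
qed

lemma cvalid_bridge: "bridgeable p s \<Longrightarrow> p \<subseteq> {1..n} \<Longrightarrow> cvalid S k (vtx p) (vtx s) (bridge k p s)"
  using crit_datum_valid cvalid_single_S[of k "crit_datum k"] vtx_cell
  by (auto simp: bridge_def bridgeable_def)

lemma datum_factor:
  assumes d: "dvalid S k (N, y, u, w, gs)"
  obtains M F g where "F \<in> cells S M" "inj_on F (Pow {1..M})" "cmor M n F" "g u \<subseteq> g w" "g w \<subseteq> {1..M}"
    "y u = F (g u)" "y w = F (g w)" "dvalid S k (M, F, g u, g w, map (map_path g) gs)"
    "ctx_eq S k (vtx (y u)) (vtx (y w)) [(N, y, u, w, gs)] [(M, F, g u, g w, map (map_path g) gs)]"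
proof -
  have y: "y \<in> cells S N" and ns: "nsimp N u w k gs" using d by auto
  obtain M F g where F: "F \<in> cells S M" and g: "cmor N M g" and yF: "y = rest N (F \<circ> g)"
    and inj: "inj_on F (Pow {1..M})" using factor[OF y] by blast
  note uw = nsimp_endpoints[OF ns]
  have yuw: "y u = F (g u)" "y w = F (g w)" using uw yF by (auto simp: rest_def)
  have dF: "dvalid S k (M, F, g u, g w, map (map_path g) gs)" using F nsimp_map_path[OF g ns] by simp
  have "act S N M g F = y" using yF by simp
  moreover have "cvalid S k (vtx (y u)) (vtx (y w)) [(N, y, u, w, gs)]"
    "cvalid S k (vtx (y u)) (vtx (y w)) [(M, F, g u, g w, map (map_path g) gs)]"
    using cvalid_single_S[OF d] cvalid_single_S[OF dF] yuw by simp_all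
  ultimately have "ctx_eq S k (vtx (y u)) (vtx (y w)) [(N, y, u, w, gs)] [(M, F, g u, g w, map (map_path g) gs)]"
    using ctx_eq_basic[OF vertices_closed_S basic_transportI[OF g F, of u w gs k]] by simp
  moreover have "g u \<subseteq> g w" "g w \<subseteq> {1..M}" using cmor_mono[OF g] cmor_range[OF g] uw by auto
  ultimately show ?thesis using that F inj cells_cmor[OF F] yuw dF by blast
qed

text \<open>The generator factors through a cell injective on vertices, where all its paths are equivalent
  to a single edge; that edge is either degenerate or a transport of the critical edge.\<close>

lemma ctx_eq_bridge:
  assumes d: "dvalid S k d" and b: "bridgeable (src_vtx d) (tgt_vtx d)"
  shows "ctx_eq S k (vtx (src_vtx d)) (vtx (tgt_vtx d)) [d] (bridge k (src_vtx d) (tgt_vtx d))"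
proof -
  obtain N y u w gs where dd: "d = (N, y, u, w, gs)" by (cases d)
  obtain M F g where F: "F \<in> cells S M" "inj_on F (Pow {1..M})" "cmor M n F"
    and gw: "g u \<subseteq> g w" "g w \<subseteq> {1..M}" and yuw: "y u = F (g u)" "y w = F (g w)"
    and dF: "dvalid S k (M, F, g u, g w, map (map_path g) gs)"
    and T: "ctx_eq S k (vtx (y u)) (vtx (y w)) [(N, y, u, w, gs)] [(M, F, g u, g w, map (map_path g) gs)]"
    using datum_factor d dd by (metis dvalid.simps)
  have cov: "covers (g u) (g w)"
    using covers_reflect[OF F(3,2) gw] bridgeable_covers b dd yuw by simp
  have inj: "y u = y w \<longleftrightarrow> g u = g w"
  proof
    assume "y u = y w"
    moreover have "g u \<in> Pow {1..M}" "g w \<in> Pow {1..M}" using gw by auto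
    ultimately show "g u = g w" using inj_onD[OF F(2)] yuw by metis
  qed (simp add: yuw)
  have crit: "y u = crit_src" "y w = crit_tgt" "act S 1 M (edge (g u) (g w)) F = crit n i e"
    if "g u \<noteq> g w"
  proof -
    have "y u \<noteq> y w" using inj that by blast
    then show "y u = crit_src" "y w = crit_tgt" using b dd by (auto simp: bridgeable_def)
    then show "act S 1 M (edge (g u) (g w)) F = crit n i e"
      using rest1_comp_eq_edge[OF cmor_edge_covers[OF gw(2) _ cov] F(3)] gw that yuw
      by (simp add: crit_eq_edge)
  qed
  have "cvalid S k (vert S M F (g u)) (vert S M F (g w))
      [(1, act S 1 M (edge (g u) (g w)) F, {}, {1}, replicate (Suc k) [edge {} {1}])]" if "g u \<noteq> g w"
    using cvalid_single_S[OF crit_datum_valid(1)] crit_datum_valid(2,3) crit[OF that] yuw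
    by (simp add: crit_datum_def)
  note L = ctx_eq_covering_datum[OF vertices_closed_S dF cov this]
  have "(if g u = g w then [] else [(1, act S 1 M (edge (g u) (g w)) F, {}, {1}, replicate (Suc k) [edge {} {1}])])
      = bridge k (y u) (y w)"
    using crit inj by (simp add: bridge_def crit_datum_def)
  with L have "ctx_eq S k (vtx (y u)) (vtx (y w)) [(M, F, g u, g w, map (map_path g) gs)] (bridge k (y u) (y w))"
    using yuw by simp
  then show ?thesis using ctx_eq_trans[OF T] dd by simp
qed

end

section \<open>The quotient collapsing the critical edge\<close>

definition rep :: "'a set \<Rightarrow> 'a" where
  "rep X = (SOME x. x \<in> X)"

lemma rep_singleton [simp]: "rep {y} = y"
  by (simp add: rep_def)

lemma rep_in: "X \<noteq> {} \<Longrightarrow> rep X \<in> X"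
  unfolding rep_def by (simp add: some_in_eq)

lemma cells_quot: "cells (quot S C) m = qcls (C m) ` cells S m"
  by (simp add: cells_def quot_def)

lemma act_quot: "act (quot S C) m m' f X = qcls (C m) (act S m m' f (rep X))"
  by (simp add: act_def quot_def rep_def)

fun lift_datum :: "vmap set datum \<Rightarrow> vmap datum" where
  "lift_datum (N, X, u, w, gs) = (N, rep X, u, w, gs)"

context cube_subcomplex
begin

abbreviation C :: "nat \<Rightarrow> vmap set" where
  "C \<equiv> collapsed n i e"

abbreviation H :: "vmap set cset" where
  "H \<equiv> quot S C"

abbreviation pt :: "vmap set" where
  "pt \<equiv> C 0"

definition qvtx :: "nat set \<Rightarrow> vmap set" where
  "qvtx v = qcls pt (vtx v)"

lemma cells_H: "cells H m = qcls (C m) ` cells S m"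
  by (rule cells_quot)

lemma act_H: "act H m m' f X = qcls (C m) (rest m (rep X \<circ> f))"
  by (simp add: act_quot)

lemma collapsed_act: assumes c: "c \<in> C N" and f: "cmor M N f" shows "rest M (c \<circ> f) \<in> C M"
proof -
  obtain y where y: "cmor N 1 y" "c = rest N (crit n i e \<circ> y)" using c by (auto simp: collapsed_def)
  have "rest M (c \<circ> f) = rest M (crit n i e \<circ> rest M (y \<circ> f))"
    using cmor_range[OF f] y(2) by (auto simp: rest_def fun_eq_iff)
  then show ?thesis using cmor_comp[OF y(1) f] by (auto simp: collapsed_def)
qed

lemma collapsed_subset_cells: "C m \<subseteq> cells S m"
  using cells_closed[OF crit_cell] by (auto simp: collapsed_def)

lemma collapsed_const: "v \<subseteq> {1..1} \<Longrightarrow> rest m (crit n i e \<circ> rest m (\<lambda>_. v)) \<in> C m"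
  unfolding collapsed_def using cmor_const[of v 1 m] by blast

lemma rep_collapsed: "rep (C m) \<in> C m"
proof -
  have "C m \<noteq> {}" using collapsed_const[of "{}" m] by auto
  then show ?thesis by (rule rep_in)
qed

lemma collapsed_vtx_apply: assumes "c \<in> C N" "u \<subseteq> {1..N}" shows "collapsed_vtx (c u)"
proof -
  obtain y where y: "cmor N 1 y" "c = rest N (crit n i e \<circ> y)" using assms by (auto simp: collapsed_def)
  have "y u \<subseteq> {1..1}" using cmor_range[OF y(1) assms(2)] .
  then have "y u = {} \<or> y u = {1}" by auto
  then show ?thesis unfolding collapsed_vtx_def using y(2) assms(2) by (auto simp: rest_def crit_eq_edge edge_def)
qed

lemma pt_eq: "pt = {vtx crit_src, vtx crit_tgt}"
proof
  show "pt \<subseteq> {vtx crit_src, vtx crit_tgt}"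
  proof
    fix c assume c: "c \<in> pt"
    then have "cmor 0 n c" using collapsed_subset_cells cells_cmor by blast
    then have "c = vtx (c {})" by (rule cmor0_eq_vtx)
    then show "c \<in> {vtx crit_src, vtx crit_tgt}"
      using collapsed_vtx_apply[OF c, of "{}"] by (auto simp: collapsed_vtx_def)
  qed
  have "vtx crit_src = rest 0 (crit n i e \<circ> rest 0 (\<lambda>_. {}))" "vtx crit_tgt = rest 0 (crit n i e \<circ> rest 0 (\<lambda>_. {1}))"
    by (auto simp: vtx_def rest_def crit_eq_edge edge_def fun_eq_iff)
  then show "{vtx crit_src, vtx crit_tgt} \<subseteq> pt" using collapsed_const by auto
qed

lemma crit_collapsed: "crit n i e \<in> C 1"
proof -
  have "rest 1 (crit n i e \<circ> edge {} {1}) = crit n i e"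
    using rest1_comp_edge_01[OF cells_cmor[OF crit_cell]] .
  then show ?thesis using cmor_edge_01 unfolding collapsed_def by force
qed

lemma cells_H_cases:
  assumes "X \<in> cells H m"
  obtains "X = C m" | y where "X = {y}" "y \<in> cells S m" "y \<notin> C m"
  using assms unfolding cells_H qcls_def by (auto split: if_splits)

lemma collapsed_cell_H: "C m \<in> cells H m"
proof -
  have "qcls (C m) (rep (C m)) = C m" using rep_collapsed by (simp add: qcls_def)
  moreover have "rep (C m) \<in> cells S m" using rep_collapsed collapsed_subset_cells by blast
  ultimately show ?thesis unfolding cells_H by (metis image_eqI)
qed

lemma rep_cell_H: "X \<in> cells H m \<Longrightarrow> rep X \<in> cells S m"
  by (cases rule: cells_H_cases) (use rep_collapsed collapsed_subset_cells in auto)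

lemma singleton_cell_H: "{y} \<in> cells H N \<Longrightarrow> y \<in> cells S N \<and> y \<notin> C N"
proof -
  assume h: "{y} \<in> cells H N"
  then obtain z where z: "z \<in> cells S N" "{y} = qcls (C N) z" unfolding cells_H by blast
  have "rest N (crit n i e \<circ> rest N (\<lambda>_. {})) \<noteq> rest N (crit n i e \<circ> rest N (\<lambda>_. {1}))"
    using crit_src_tgt(5) by (auto simp: rest_def fun_eq_iff crit_eq_edge dest: spec[of _ "{}"])
  then have "C N \<noteq> {y}" using collapsed_const[of "{}" N] collapsed_const[of "{1}" N] by auto
  then show ?thesis using z by (auto simp: qcls_def split: if_splits)
qed

lemma act_H_collapsed: "cmor M N f \<Longrightarrow> act H M N f (C N) = C M"
  using collapsed_act[OF rep_collapsed] by (simp add: act_H qcls_def)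

lemma act_H_singleton: "act H M N f {y} = qcls (C M) (rest M (y \<circ> f))"
  by (simp add: act_H)

lemma pt_cell: "pt \<in> cells H 0"
  by (rule collapsed_cell_H)

lemma qvtx_collapsed: "collapsed_vtx v \<Longrightarrow> qvtx v = pt"
  using pt_eq by (auto simp: qvtx_def qcls_def collapsed_vtx_def)

lemma qvtx_eq_iff: "qvtx v = qvtx v' \<longleftrightarrow> v = v' \<or> (collapsed_vtx v \<and> collapsed_vtx v')"
proof -
  have "pt \<noteq> {vtx v}" for v using pt_eq crit_src_tgt(5) by auto
  moreover have "\<not> collapsed_vtx v \<Longrightarrow> qvtx v = {vtx v}" for v
    using pt_eq by (auto simp: qvtx_def qcls_def collapsed_vtx_def)
  ultimately show ?thesis
    by (cases "collapsed_vtx v"; cases "collapsed_vtx v'") (auto simp: qvtx_collapsed)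
qed

lemma vert_H [simp]: "vert H N X u = qvtx (rep X u)"
  by (auto simp: vert_def act_H qvtx_def vtx_def rest_def fun_eq_iff intro!: arg_cong[where f="qcls pt"])

lemma vertices_closed_H: "vertices_closed H"
  unfolding vertices_closed_def
proof (intro allI impI)
  fix k and d :: "vmap set datum"
  assume "dvalid H k d"
  then have "dvalid S k (lift_datum d)" by (cases d) (auto intro: rep_cell_H)
  then have "src_vtx (lift_datum d) \<subseteq> {1..n}" "tgt_vtx (lift_datum d) \<subseteq> {1..n}"
    using dvalid_S_vertices by blast+
  then show "dsrc H d \<in> cells H 0 \<and> dtgt H d \<in> cells H 0"
    using vtx_cell by (cases d) (auto simp: cells_H qvtx_def)
qed

lemma lift_datum_valid:
  "dvalid H k x \<Longrightarrow> dvalid S k (lift_datum x) \<and> dsrc H x = qvtx (src_vtx (lift_datum x))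
     \<and> dtgt H x = qvtx (tgt_vtx (lift_datum x))"
  by (cases x) (auto intro: rep_cell_H)

lemma qvtx_rep_collapsed: "v \<subseteq> {1..m} \<Longrightarrow> qvtx (rep (C m) v) = pt"
  using qvtx_collapsed collapsed_vtx_apply rep_collapsed by blast

lemma ctx_eq_collapsed_cell:
  assumes d: "dvalid H k (N, C N, u, w, gs)"
  shows "ctx_eq H k pt pt [(N, C N, u, w, gs)] []"
proof -
  have ns: "nsimp N u w k gs" using d by simp
  note uw = nsimp_endpoints[OF ns]
  define g where "g = rest N (\<lambda>_. ({} :: nat set))"
  have g: "cmor N 0 g" unfolding g_def by (rule cmor_const) simp
  have guw: "g u = {}" "g w = {}" using uw by (auto simp: g_def rest_def)
  have d0: "dvalid H k (0, pt, {}, {}, map (map_path g) gs)"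
    using nsimp_map_path[OF g ns] guw pt_cell by simp
  have "cvalid H k pt pt [(N, C N, u, w, gs)]" "cvalid H k pt pt [(0, pt, {}, {}, map (map_path g) gs)]"
    using d d0 uw qvtx_rep_collapsed[of "{}" 0] by (auto simp: cvalid_single[OF vertices_closed_H] qvtx_rep_collapsed)
  then have "ctx_eq H k pt pt [(N, C N, u, w, gs)] [(0, pt, {}, {}, map (map_path g) gs)]"
    using ctx_eq_basic[OF vertices_closed_H basic_transportI[OF g pt_cell, of u w gs k]] act_H_collapsed[OF g] guw
    by simp
  moreover have "ctx_eq H k pt pt [(0, pt, {}, {}, map (map_path g) gs)] []"
    using ctx_eq_loop_datum[OF vertices_closed_H d0] qvtx_rep_collapsed[of "{}" 0] by simp
  ultimately show ?thesis by (rule ctx_eq_trans)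
qed

lemma ctx_eq_crit_cell:
  "ctx_eq H k pt pt [(1, C 1, {}, {1}, replicate (Suc k) [edge {} {1}])] []"
proof -
  have "is_path 1 {} {1} [edge {} {1}]" using cmor_edge_01 by (simp add: is_path_Cons)
  then show ?thesis
    using ctx_eq_collapsed_cell collapsed_cell_H nsimp_replicate by (simp del: replicate_Suc)
qed

lemma ctx_eq_collapsed_injective_cell:
  assumes F: "F \<in> cells S M" "inj_on F (Pow {1..M})" and d: "dvalid H k (M, {F}, c0, c1, gs)"
    and c: "collapsed_vtx (F c0)" "collapsed_vtx (F c1)"
  shows "ctx_eq H k pt pt [(M, {F}, c0, c1, gs)] []"
proof -
  have cc: "c0 \<subseteq> c1" "c1 \<subseteq> {1..M}" using nsimp_endpoints[of M c0 c1 k gs] d by auto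
  have FF: "F c0 \<subseteq> F c1" using cmor_mono[OF cells_cmor[OF F(1)] cc] .
  have cov: "covers c0 c1"
    using covers_reflect[OF cells_cmor[OF F(1)] F(2) cc] bridgeable_covers bridgeable_collapsed c FF by simp
  have act: "act H 1 M (edge c0 c1) {F} = C 1" if ne: "c0 \<noteq> c1"
  proof -
    have "F c0 \<noteq> F c1" using inj_onD[OF F(2)] ne cc by blast
    moreover have "bridgeable (F c0) (F c1)" using bridgeable_collapsed c FF by simp
    ultimately have "F c0 = crit_src" "F c1 = crit_tgt" by (auto simp: bridgeable_def)
    then have "rest 1 (F \<circ> edge c0 c1) = crit n i e"
      using rest1_comp_eq_edge[OF cmor_edge_covers[OF cc(2) _ cov] cells_cmor[OF F(1)]] cc ne
      by (simp add: crit_eq_edge)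
    then show ?thesis using crit_collapsed by (simp add: act_H_singleton qcls_def)
  qed
  have "cvalid H k (qvtx (F c0)) (qvtx (F c1))
      [(1, act H 1 M (edge c0 c1) {F}, {}, {1}, replicate (Suc k) [edge {} {1}])]" if "c0 \<noteq> c1"
    using ctx_eq_cvalid[OF ctx_eq_crit_cell] act[OF that] c qvtx_collapsed by simp
  then have L: "ctx_eq H k (qvtx (F c0)) (qvtx (F c1)) [(M, {F}, c0, c1, gs)]
      (if c0 = c1 then [] else [(1, act H 1 M (edge c0 c1) {F}, {}, {1}, replicate (Suc k) [edge {} {1}])])"
    by (rule ctx_eq_covering_datum[OF vertices_closed_H d cov, unfolded vert_H rep_singleton])
  show ?thesis
  proof (cases "c0 = c1")
    case True
    then show ?thesis using L c qvtx_collapsed by simp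
  next
    case False
    then have "ctx_eq H k pt pt [(M, {F}, c0, c1, gs)] [(1, C 1, {}, {1}, replicate (Suc k) [edge {} {1}])]"
      using L act c qvtx_collapsed by simp
    then show ?thesis using ctx_eq_crit_cell by (rule ctx_eq_trans)
  qed
qed

lemma ctx_eq_collapsed_singleton:
  assumes d: "dvalid H k (N, {y}, u, w, gs)" and yuw: "collapsed_vtx (y u)" "collapsed_vtx (y w)"
  shows "ctx_eq H k pt pt [(N, {y}, u, w, gs)] []"
proof -
  have ns: "nsimp N u w k gs" and y: "y \<in> cells S N" "y \<notin> C N"
    using d singleton_cell_H by auto
  note uw = nsimp_endpoints[OF ns]
  obtain M F g where F: "F \<in> cells S M" and g: "cmor N M g" and yF: "y = rest N (F \<circ> g)"
    and inj: "inj_on F (Pow {1..M})" using factor[OF y(1)] by blast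
  have "F \<notin> C M" using collapsed_act[OF _ g, of F] yF y(2) by auto
  then have FH: "{F} \<in> cells H M" using F unfolding cells_H qcls_def by force
  have yuw': "y u = F (g u)" "y w = F (g w)" using uw yF by (auto simp: rest_def)
  have dF: "dvalid H k (M, {F}, g u, g w, map (map_path g) gs)" using FH nsimp_map_path[OF g ns] by simp
  have "act H N M g {F} = {y}" using y(2) yF by (simp add: act_H_singleton qcls_def)
  moreover have "cvalid H k pt pt [(N, {y}, u, w, gs)]" "cvalid H k pt pt [(M, {F}, g u, g w, map (map_path g) gs)]"
    using d dF yuw yuw' qvtx_collapsed by (auto simp: cvalid_single[OF vertices_closed_H])
  ultimately have "ctx_eq H k pt pt [(N, {y}, u, w, gs)] [(M, {F}, g u, g w, map (map_path g) gs)]"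
    using ctx_eq_basic[OF vertices_closed_H basic_transportI[OF g FH, of u w gs k]] by simp
  moreover have "ctx_eq H k pt pt [(M, {F}, g u, g w, map (map_path g) gs)] []"
    using ctx_eq_collapsed_injective_cell[OF F inj dF] yuw yuw' by simp
  ultimately show ?thesis by (rule ctx_eq_trans)
qed

lemma ctx_eq_collapsed_H:
  assumes d: "dvalid H k x" and c: "collapsed_datum (lift_datum x)"
  shows "ctx_eq H k pt pt [x] []"
proof -
  obtain N X u w gs where x: "x = (N, X, u, w, gs)" by (cases x)
  have "X \<in> cells H N" using d x by simp
  then show ?thesis
  proof (cases rule: cells_H_cases)
    case 1
    then show ?thesis using ctx_eq_collapsed_cell d x by simp
  next
    case (2 y)
    then show ?thesis using ctx_eq_collapsed_singleton d x c by (simp add: collapsed_datum_def)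
  qed
qed

section \<open>The quotient map on chains\<close>

abbreviation qdatum :: "vmap datum \<Rightarrow> vmap set datum" where
  "qdatum \<equiv> dmap (qmap n i e)"

lemma qmap_apply: "qmap n i e N y = qcls (C N) y"
  by (simp add: qmap_def)

lemma qmap_vtx [simp]: "qmap n i e 0 (vtx v) = qvtx v"
  by (simp add: qmap_apply qvtx_def)

lemma qcls_cell: "y \<in> cells S N \<Longrightarrow> qcls (C N) y \<in> cells H N"
  unfolding cells_H by blast

lemma qvtx_rep_qcls:
  assumes "y \<in> cells S N" "u \<subseteq> {1..N}"
  shows "qvtx (rep (qcls (C N) y) u) = qvtx (y u)"
  using assms qvtx_rep_collapsed qvtx_collapsed collapsed_vtx_apply by (simp add: qcls_def)

lemma dvalid_qdatum: "dvalid S k d \<Longrightarrow> dvalid H k (qdatum d)"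
  by (cases d) (auto simp: qmap_apply intro: qcls_cell)

lemma dsrc_dtgt_qdatum:
  assumes "dvalid S k d"
  shows "dsrc H (qdatum d) = qvtx (src_vtx d)" "dtgt H (qdatum d) = qvtx (tgt_vtx d)"
proof -
  obtain N y u w gs where d: "d = (N, y, u, w, gs)" by (cases d)
  have y: "y \<in> cells S N" and "nsimp N u w k gs" using assms d by auto
  then have "u \<subseteq> {1..N}" "w \<subseteq> {1..N}" using nsimp_endpoints by blast+
  then show "dsrc H (qdatum d) = qvtx (src_vtx d)" "dtgt H (qdatum d) = qvtx (tgt_vtx d)"
    using qvtx_rep_qcls[OF y] d by (simp_all add: qmap_apply)
qed

lemma cvalid_qdatum: "cvalid S k a b X \<Longrightarrow> cvalid H k (qmap n i e 0 a) (qmap n i e 0 b) (map qdatum X)"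
proof (induction X arbitrary: a)
  case Nil
  then show ?case using qcls_cell by (auto simp: qmap_apply)
next
  case (Cons d X)
  then have d: "dvalid S k d" "a = vtx (src_vtx d)" "cvalid S k (vtx (tgt_vtx d)) b X"
    by (auto simp: cvalid_Cons[OF vertices_closed_S] dvalid_S_vertices)
  then show ?case
    using Cons.IH[OF d(3)] dvalid_qdatum[OF d(1)] dsrc_dtgt_qdatum[OF d(1)]
    by (simp add: cvalid_Cons[OF vertices_closed_H])
qed

lemma qcls_act:
  assumes f: "cmor M N f" and x: "x \<in> cells S N"
  shows "qcls (C M) (rest M (x \<circ> f)) = act H M N f (qcls (C N) x)"
proof (cases "x \<in> C N")
  case True
  then show ?thesis using collapsed_act[OF True f] act_H_collapsed[OF f] by (simp add: qcls_def)
next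
  case False
  then show ?thesis by (simp add: qcls_def act_H_singleton)
qed

lemma basic_qdatum:
  assumes b: "(l, r) \<in> basic S k"
  shows "(map qdatum l, map qdatum r) \<in> basic H k"
  using b
proof (cases rule: basic_cases)
  case pequiv
  then show ?thesis by (simp add: basic_pequivI)
next
  case (transport M N f x u w gs)
  then show ?thesis using basic_transportI[OF transport(3) qcls_cell[OF transport(4)]]
    by (simp add: qmap_apply qcls_act)
next
  case compose
  then show ?thesis by (simp add: basic_composeI)
next
  case unit
  then show ?thesis by (simp del: replicate_Suc add: basic_unitI)
qed

lemma ceq_qdatum: "(X, Y) \<in> ceq S k \<Longrightarrow> (map qdatum X, map qdatum Y) \<in> ceq H k"
  unfolding ceq_def
proof (induction rule: rtrancl_induct)
  case base
  then show ?case by simp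
next
  case (step y z)
  have "(map qdatum Z, map qdatum Z') \<in> crel H k" if "(Z, Z') \<in> crel S k" for Z Z'
  proof -
    from that obtain D l r E a b where z: "Z = D @ l @ E" "Z' = D @ r @ E" and lr: "(l, r) \<in> basic S k"
      and v: "cvalid S k a b Z" "cvalid S k a b Z'" unfolding crel_def by blast
    show ?thesis
      using crelI[OF basic_qdatum[OF lr]] cvalid_qdatum[OF v(1)] cvalid_qdatum[OF v(2)] z by simp
  qed
  then have "(map qdatum y, map qdatum z) \<in> crel H k \<union> (crel H k)\<inverse>" using step(2) by blast
  then show ?case using step(3) by (meson rtrancl.rtrancl_into_rtrancl)
qed

lemma Cmap_class: "Cmap H (qmap n i e) k (ceq S k `` {Y}) = ceq H k `` {map qdatum Y}"
proof -
  have "(SOME ds. ds \<in> ceq S k `` {Y}) \<in> ceq S k `` {Y}" by (rule someI[of _ Y]) simp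
  then have "(map qdatum Y, map qdatum (SOME ds. ds \<in> ceq S k `` {Y})) \<in> ceq H k"
    using ceq_qdatum by blast
  then show ?thesis unfolding Cmap_def using ceq_Image_eq_iff by metis
qed

section \<open>Lifting chains of the quotient\<close>

fun bridged :: "nat \<Rightarrow> nat set \<Rightarrow> vmap datum list \<Rightarrow> vmap datum list" where
  "bridged k p [] = []"
| "bridged k p (d # F) = bridge k p (src_vtx d) @ d # bridged k (tgt_vtx d) F"

fun chain_end :: "nat set \<Rightarrow> vmap datum list \<Rightarrow> nat set" where
  "chain_end p [] = p"
| "chain_end p (d # F) = chain_end (tgt_vtx d) F"

fun bridgeable_chain :: "nat set \<Rightarrow> vmap datum list \<Rightarrow> bool" where
  "bridgeable_chain p [] = True"
| "bridgeable_chain p (d # F) = (bridgeable p (src_vtx d) \<and> bridgeable_chain (tgt_vtx d) F)"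

definition bridged_to :: "nat \<Rightarrow> nat set \<Rightarrow> vmap datum list \<Rightarrow> nat set \<Rightarrow> vmap datum list" where
  "bridged_to k p F s = bridged k p F @ bridge k (chain_end p F) s"

definition liftable :: "nat \<Rightarrow> nat set \<Rightarrow> vmap datum list \<Rightarrow> nat set \<Rightarrow> bool" where
  "liftable k p F s \<longleftrightarrow> bridgeable_chain p F \<and> bridgeable (chain_end p F) s \<and> (\<forall>d\<in>set F. dvalid S k d)"

definition noncollapsed_lifts :: "vmap set datum list \<Rightarrow> vmap datum list" where
  "noncollapsed_lifts X = filter (\<lambda>d. \<not> collapsed_datum d) (map lift_datum X)"

text \<open>The inverse of the quotient map on chains from \<open>a\<close> to \<open>b\<close>.\<close>

definition lift_chain :: "nat \<Rightarrow> nat set \<Rightarrow> nat set \<Rightarrow> vmap set datum list \<Rightarrow> vmap datum list" where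
  "lift_chain k a b X = bridged_to k a (noncollapsed_lifts X) b"

lemma bridged_append: "bridged k p (A @ B) = bridged k p A @ bridged k (chain_end p A) B"
  by (induction A arbitrary: p) auto

lemma chain_end_append: "chain_end p (A @ B) = chain_end (chain_end p A) B"
  by (induction A arbitrary: p) auto

lemma bridgeable_chain_append:
  "bridgeable_chain p (A @ B) \<longleftrightarrow> bridgeable_chain p A \<and> bridgeable_chain (chain_end p A) B"
  by (induction A arbitrary: p) auto

lemma noncollapsed_lifts_append [simp]:
  "noncollapsed_lifts (A @ B) = noncollapsed_lifts A @ noncollapsed_lifts B"
  by (simp add: noncollapsed_lifts_def)

lemma noncollapsed_lifts_Nil [simp]: "noncollapsed_lifts [] = []"
  by (simp add: noncollapsed_lifts_def)

lemma bridged_to_Cons: "bridged_to k p (d # F) s = bridge k p (src_vtx d) @ d # bridged_to k (tgt_vtx d) F s"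
  by (simp add: bridged_to_def)

lemma liftable_Cons:
  "liftable k p (d # F) s \<longleftrightarrow> bridgeable p (src_vtx d) \<and> dvalid S k d \<and> liftable k (tgt_vtx d) F s"
  by (auto simp: liftable_def)

lemma cvalid_bridged:
  "bridgeable_chain p F \<Longrightarrow> \<forall>d\<in>set F. dvalid S k d \<Longrightarrow> p \<subseteq> {1..n} \<Longrightarrow>
     cvalid S k (vtx p) (vtx (chain_end p F)) (bridged k p F) \<and> chain_end p F \<subseteq> {1..n}"
proof (induction F arbitrary: p)
  case Nil
  then show ?case using vtx_cell by auto
next
  case (Cons d F)
  have d: "dvalid S k d" and l: "bridgeable p (src_vtx d)" "bridgeable_chain (tgt_vtx d) F"
    using Cons.prems by auto
  note D = dvalid_S_vertices[OF d]
  have IH: "cvalid S k (vtx (tgt_vtx d)) (vtx (chain_end (tgt_vtx d) F)) (bridged k (tgt_vtx d) F)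
      \<and> chain_end (tgt_vtx d) F \<subseteq> {1..n}"
    using Cons.IH[OF l(2)] Cons.prems D by auto
  then have "cvalid S k (vtx (src_vtx d)) (vtx (chain_end (tgt_vtx d) F)) (d # bridged k (tgt_vtx d) F)"
    using d D by (simp add: cvalid_Cons[OF vertices_closed_S])
  then show ?case using cvalid_bridge[OF l(1) Cons.prems(3)] IH
    by (auto simp: cvalid_append[OF vertices_closed_S])
qed

lemma cvalid_bridged_to: "liftable k p F s \<Longrightarrow> p \<subseteq> {1..n} \<Longrightarrow> cvalid S k (vtx p) (vtx s) (bridged_to k p F s)"
  using cvalid_bridged[of p F k] cvalid_bridge[of "chain_end p F" s k]
  by (auto simp: liftable_def bridged_to_def cvalid_append[OF vertices_closed_S])

lemma bridged_to_shift:
  assumes "bridgeable p t" "liftable k t F s"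
  shows "bridge k p t @ bridged_to k t F s = bridged_to k p F s \<and> liftable k p F s"
proof (cases F)
  case Nil
  then show ?thesis using assms bridge_append bridgeable_trans by (simp add: bridged_to_def liftable_def)
next
  case (Cons d F')
  then show ?thesis using assms bridge_append[of p t "src_vtx d" k] bridgeable_trans[of p t "src_vtx d"]
    by (simp add: bridged_to_def liftable_def)
qed

lemma ctx_eq_bridged_noncollapsed:
  "cvalid S k (vtx p) (vtx b) Y \<Longrightarrow>
     ctx_eq S k (vtx p) (vtx b) Y (bridged_to k p (filter (\<lambda>d. \<not> collapsed_datum d) Y) b) \<and>
     liftable k p (filter (\<lambda>d. \<not> collapsed_datum d) Y) b"
proof (induction Y arbitrary: p)
  case Nil
  then show ?case by (auto simp: bridged_to_def liftable_def intro!: ctx_eq_refl)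
next
  case (Cons d Y)
  have d: "dvalid S k d" and "dsrc S d = vtx p" "cvalid S k (dtgt S d) (vtx b) Y"
    using Cons.prems by (simp_all add: cvalid_Cons[OF vertices_closed_S])
  then have sd: "src_vtx d = p" and Y: "cvalid S k (vtx (tgt_vtx d)) (vtx b) Y"
    using dvalid_S_vertices(3,4)[OF d] by simp_all
  define F where "F = filter (\<lambda>d. \<not> collapsed_datum d) Y"
  have IH: "ctx_eq S k (vtx (tgt_vtx d)) (vtx b) Y (bridged_to k (tgt_vtx d) F b) \<and> liftable k (tgt_vtx d) F b"
    using Cons.IH[OF Y] by (simp add: F_def)
  have L1: "ctx_eq S k (vtx p) (vtx b) ([d] @ Y) ([d] @ bridged_to k (tgt_vtx d) F b)"
    using ctx_eq_append_left[OF vertices_closed_S cvalid_single_S[OF d]] IH sd by blast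
  show ?case
  proof (cases "collapsed_datum d")
    case False
    then show ?thesis using L1 IH sd d by (simp add: F_def bridged_to_Cons liftable_Cons)
  next
    case True
    have ln: "bridgeable p (tgt_vtx d)"
      using True sd bridgeable_collapsed dvalid_S_vertices(1)[OF d] by (simp add: collapsed_datum_def)
    have "ctx_eq S k (vtx p) (vtx (tgt_vtx d)) [d] (bridge k p (tgt_vtx d))"
      using ctx_eq_bridge[OF d] ln sd by simp
    moreover have "cvalid S k (vtx (tgt_vtx d)) (vtx b) (bridged_to k (tgt_vtx d) F b)"
      using IH by (simp add: ctx_eq_def)
    ultimately have "ctx_eq S k (vtx p) (vtx b) ([d] @ bridged_to k (tgt_vtx d) F b)
        (bridge k p (tgt_vtx d) @ bridged_to k (tgt_vtx d) F b)"
      by (rule ctx_eq_append_right[OF vertices_closed_S])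
    then show ?thesis
      using ctx_eq_trans[OF L1] bridged_to_shift[OF ln conjunct2[OF IH]] True by (simp add: F_def)
  qed
qed

lemma lift_qdatum:
  assumes "dvalid S k d"
  shows "collapsed_datum (lift_datum (qdatum d)) \<longleftrightarrow> collapsed_datum d"
    and "\<not> collapsed_datum d \<Longrightarrow> lift_datum (qdatum d) = d"
proof -
  obtain N y u w gs where d: "d = (N, y, u, w, gs)" by (cases d)
  have "nsimp N u w k gs" using assms d by simp
  then have uw: "u \<subseteq> {1..N}" "w \<subseteq> {1..N}" using nsimp_endpoints by blast+
  show "collapsed_datum (lift_datum (qdatum d)) \<longleftrightarrow> collapsed_datum d"
    "\<not> collapsed_datum d \<Longrightarrow> lift_datum (qdatum d) = d"
    using collapsed_vtx_apply[OF rep_collapsed uw(1)] collapsed_vtx_apply[OF rep_collapsed uw(2)]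
      collapsed_vtx_apply[of y N, OF _ uw(1)] collapsed_vtx_apply[of y N, OF _ uw(2)] d
    by (auto simp: collapsed_datum_def qcls_def qmap_apply)
qed

lemma noncollapsed_lifts_qdatum:
  "\<forall>d\<in>set Y. dvalid S k d \<Longrightarrow> noncollapsed_lifts (map qdatum Y) = filter (\<lambda>d. \<not> collapsed_datum d) Y"
proof (induction Y)
  case (Cons d Y)
  then have "dvalid S k d" by simp
  then show ?case using Cons lift_qdatum[of k d] by (auto simp: noncollapsed_lifts_def)
qed simp

lemma ctx_eq_lift_chain_qdatum:
  "cvalid S k (vtx a) (vtx b) Y \<Longrightarrow> ctx_eq S k (vtx a) (vtx b) Y (lift_chain k a b (map qdatum Y))"
  using ctx_eq_bridged_noncollapsed[of k a b Y] noncollapsed_lifts_qdatum[OF cvalid_dvalid]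
  by (simp add: lift_chain_def)

definition admissible_src :: "nat set \<Rightarrow> bool" where
  "admissible_src p \<longleftrightarrow> (e \<longrightarrow> p \<noteq> crit_tgt)"

definition admissible_tgt :: "nat set \<Rightarrow> bool" where
  "admissible_tgt b \<longleftrightarrow> (\<not> e \<longrightarrow> b \<noteq> crit_src)"

text \<open>For \<open>e\<close> the collapsed vertices form a down-set, so a noncollapsed generator never ends at
  one of them; for \<open>\<not> e\<close> they form an up-set, so it never starts at one. Hence, between
  admissible end points, a lifted chain only has to cross the collapsed point from
  \<open>crit_src\<close> to \<open>crit_tgt\<close>.\<close>

lemma crit_src_tgt_cases:
  "e \<Longrightarrow> crit_src = {} \<and> crit_tgt = {i}" "\<not> e \<Longrightarrow> crit_src = {1..n} - {i} \<and> crit_tgt = {1..n}"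
  unfolding crit_src_def crit_tgt_def by simp_all

lemma noncollapsed_datum_ends:
  assumes d: "dvalid S k d" and nc: "\<not> collapsed_datum d"
  shows "e \<Longrightarrow> \<not> collapsed_vtx (tgt_vtx d)" and "\<not> e \<Longrightarrow> \<not> collapsed_vtx (src_vtx d)"
proof -
  note D = dvalid_S_vertices[OF d]
  show "\<not> collapsed_vtx (tgt_vtx d)" if e
  proof
    assume t: "collapsed_vtx (tgt_vtx d)"
    note c = crit_src_tgt_cases(1)[OF that]
    then have "src_vtx d \<subseteq> {i}" using t D(1) by (auto simp: collapsed_vtx_def)
    then have "collapsed_vtx (src_vtx d)" using c by (auto simp: collapsed_vtx_def subset_singleton_iff)
    then show False using nc t by (simp add: collapsed_datum_def)
  qed
  show "\<not> collapsed_vtx (src_vtx d)" if "\<not> e"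
  proof
    assume s: "collapsed_vtx (src_vtx d)"
    note c = crit_src_tgt_cases(2)[OF that]
    then have "crit_src \<subseteq> tgt_vtx d" "tgt_vtx d \<subseteq> crit_tgt"
      using s D(1,2) by (auto simp: collapsed_vtx_def)
    then have "collapsed_vtx (tgt_vtx d)" using covers_crit by (simp add: covers_def collapsed_vtx_def)
    then show False using nc s by (simp add: collapsed_datum_def)
  qed
qed

lemma bridgeable_of_qvtx_eq:
  assumes "qvtx p = qvtx s" "admissible_src p" "admissible_tgt s"
  shows "bridgeable p s"
proof -
  have "p = s \<or> (collapsed_vtx p \<and> collapsed_vtx s)" using assms(1) qvtx_eq_iff by blast
  moreover have "\<not> (p = crit_tgt \<and> s = crit_src)"
    using assms(2,3) unfolding admissible_src_def admissible_tgt_def by blast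
  ultimately show ?thesis unfolding bridgeable_def collapsed_vtx_def by blast
qed

lemma liftable_noncollapsed_lifts:
  "cvalid H k (qvtx p) \<beta> X \<Longrightarrow> p \<subseteq> {1..n} \<Longrightarrow> admissible_src p \<Longrightarrow>
     bridgeable_chain p (noncollapsed_lifts X) \<and> qvtx (chain_end p (noncollapsed_lifts X)) = \<beta>
     \<and> admissible_src (chain_end p (noncollapsed_lifts X)) \<and> chain_end p (noncollapsed_lifts X) \<subseteq> {1..n}
     \<and> (\<forall>d\<in>set (noncollapsed_lifts X). dvalid S k d)"
proof (induction X arbitrary: p)
  case Nil
  then show ?case by simp
next
  case (Cons x X)
  have x: "dvalid H k x" "dsrc H x = qvtx p" "cvalid H k (dtgt H x) \<beta> X"
    using Cons.prems by (auto simp: cvalid_Cons[OF vertices_closed_H])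
  define d where "d = lift_datum x"
  have d: "dvalid S k d" and sd: "qvtx (src_vtx d) = qvtx p" and X: "cvalid H k (qvtx (tgt_vtx d)) \<beta> X"
    using lift_datum_valid[OF x(1)] x by (auto simp: d_def)
  show ?case
  proof (cases "collapsed_datum d")
    case True
    then have "qvtx (tgt_vtx d) = qvtx p" using sd qvtx_collapsed by (simp add: collapsed_datum_def)
    then show ?thesis using Cons.IH[of p] X Cons.prems True by (simp add: noncollapsed_lifts_def d_def)
  next
    case False
    have "\<not> (p = crit_tgt \<and> src_vtx d = crit_src)"
    proof
      assume h: "p = crit_tgt \<and> src_vtx d = crit_src"
      then have "\<not> e" using Cons.prems(3) unfolding admissible_src_def by blast
      then have "\<not> collapsed_vtx (src_vtx d)" by (rule noncollapsed_datum_ends(2)[OF d False])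
      then show False using h by (simp add: collapsed_vtx_def)
    qed
    then have "bridgeable p (src_vtx d)"
      using sd qvtx_eq_iff[of "src_vtx d" p] unfolding bridgeable_def collapsed_vtx_def by blast
    moreover have "admissible_src (tgt_vtx d)"
      unfolding admissible_src_def using noncollapsed_datum_ends(1)[OF d False, unfolded collapsed_vtx_def] by blast
    ultimately show ?thesis
      using Cons.IH[OF X dvalid_S_vertices(2)[OF d]] d False by (simp add: noncollapsed_lifts_def d_def)
  qed
qed

lemma liftable_lift:
  assumes "cvalid H k (qvtx a) (qvtx b) X" "a \<subseteq> {1..n}" "admissible_src a" "admissible_tgt b"
  shows "liftable k a (noncollapsed_lifts X) b"
  using liftable_noncollapsed_lifts[OF assms(1-3)] bridgeable_of_qvtx_eq assms(4)
  by (auto simp: liftable_def)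

lemma cvalid_lift_chain:
  assumes "cvalid H k (qvtx a) (qvtx b) X" "a \<subseteq> {1..n}" "admissible_src a" "admissible_tgt b"
  shows "cvalid S k (vtx a) (vtx b) (lift_chain k a b X)"
  using cvalid_bridged_to[OF liftable_lift[OF assms] assms(2)] by (simp add: lift_chain_def)

lemma vtx_cell_range: "vtx v \<in> cells S 0 \<Longrightarrow> v \<subseteq> {1..n}"
  using cmor_range[OF cells_cmor, of "vtx v" 0 "{}"] by (simp add: vtx_def rest_def)

lemma bridged_to_split:
  assumes "bridgeable p t" "bridgeable t' s" "liftable k t F t'"
  shows "bridged_to k p F s = bridge k p t @ bridged_to k t F t' @ bridge k t' s"
proof (cases F)
  case Nil
  then show ?thesis using assms bridge_append bridgeable_trans by (simp add: bridged_to_def liftable_def)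
next
  case (Cons d F')
  then show ?thesis
    using assms bridge_append[of p t "src_vtx d" k] bridge_append[of "chain_end (tgt_vtx d) F'" t' s k]
    by (simp add: bridged_to_def liftable_def)
qed

lemma ctx_eq_bridged_to_noncollapsed:
  assumes YZ: "ctx_eq S k (vtx t) (vtx t') Y Z" and b: "bridgeable p t" "bridgeable t' s" and p: "p \<subseteq> {1..n}"
  shows "ctx_eq S k (vtx p) (vtx s) (bridged_to k p (filter (\<lambda>d. \<not> collapsed_datum d) Y) s)
           (bridged_to k p (filter (\<lambda>d. \<not> collapsed_datum d) Z) s)"
proof -
  have v: "cvalid S k (vtx t) (vtx t') Y" "cvalid S k (vtx t) (vtx t') Z" using ctx_eq_cvalid[OF YZ] by blast+
  note NY = ctx_eq_bridged_noncollapsed[OF v(1)] and NZ = ctx_eq_bridged_noncollapsed[OF v(2)]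
  have "ctx_eq S k (vtx t) (vtx t') (bridged_to k t (filter (\<lambda>d. \<not> collapsed_datum d) Y) t')
      (bridged_to k t (filter (\<lambda>d. \<not> collapsed_datum d) Z) t')"
    using ctx_eq_trans[OF ctx_eq_trans[OF ctx_eq_sym YZ]] NY NZ by blast
  moreover have "t' \<subseteq> {1..n}" using vtx_cell_range cvalid_cells[OF v(1)] by blast
  then have "cvalid S k (vtx p) (vtx t) (bridge k p t)" "cvalid S k (vtx t') (vtx s) (bridge k t' s)"
    using cvalid_bridge[OF b(1) p] cvalid_bridge[OF b(2)] by blast+
  ultimately have "ctx_eq S k (vtx p) (vtx s)
      (bridge k p t @ bridged_to k t (filter (\<lambda>d. \<not> collapsed_datum d) Y) t' @ bridge k t' s)
      (bridge k p t @ bridged_to k t (filter (\<lambda>d. \<not> collapsed_datum d) Z) t' @ bridge k t' s)"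
    by (rule ctx_eq_context[OF vertices_closed_S])
  then show ?thesis
    by (simp only: bridged_to_split[OF b conjunct2[OF NY]] bridged_to_split[OF b conjunct2[OF NZ]])
qed

lemma liftable_single:
  "liftable k p (filter (\<lambda>d. \<not> collapsed_datum d) [d]) s \<Longrightarrow> \<not> collapsed_datum d \<Longrightarrow>
     bridgeable p (src_vtx d) \<and> bridgeable (tgt_vtx d) s"
  by (simp add: liftable_def)

lemma lift_transport:
  fixes gs :: "vmap list list"
  assumes f: "cmor M N f" and X: "X \<in> cells H N" and uw: "u \<subseteq> {1..M}" "w \<subseteq> {1..M}"
  defines "dl \<equiv> lift_datum (M, act H M N f X, u, w, gs)"
    and "dr \<equiv> lift_datum (N, X, f u, f w, map (map_path f) gs)"
  shows "collapsed_datum dl \<longleftrightarrow> collapsed_datum dr"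
    and "\<not> collapsed_datum dl \<Longrightarrow> ([dl], [dr]) \<in> basic S k \<and> src_vtx dl = src_vtx dr \<and> tgt_vtx dl = tgt_vtx dr"
proof -
  define z where "z = rest M (rep X \<circ> f)"
  have act: "act H M N f X = qcls (C M) z" by (simp add: act_H z_def)
  have z: "z u = rep X (f u)" "z w = rep X (f w)" using uw by (auto simp: rest_def z_def)
  have "(collapsed_datum dl \<longleftrightarrow> collapsed_datum dr) \<and> (\<not> collapsed_datum dl \<longrightarrow> dl = (M, z, u, w, gs))"
  proof (cases "z \<in> C M")
    case True
    have "collapsed_vtx (z u)" "collapsed_vtx (z w)" "collapsed_vtx (rep (C M) u)" "collapsed_vtx (rep (C M) w)"
      using collapsed_vtx_apply[OF True] collapsed_vtx_apply[OF rep_collapsed] uw by blast+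
    then have "collapsed_datum dl" "collapsed_datum dr"
      using act z True by (simp_all add: dl_def dr_def qcls_def collapsed_datum_def)
    then show ?thesis by simp
  next
    case False
    then show ?thesis using act z by (simp add: dl_def dr_def qcls_def collapsed_datum_def)
  qed
  moreover have "([(M, z, u, w, gs)], [dr]) \<in> basic S k"
    using basic_transportI[OF f rep_cell_H[OF X], of u w gs k] by (simp add: z_def dr_def)
  ultimately show "collapsed_datum dl \<longleftrightarrow> collapsed_datum dr"
    "\<not> collapsed_datum dl \<Longrightarrow> ([dl], [dr]) \<in> basic S k \<and> src_vtx dl = src_vtx dr \<and> tgt_vtx dl = tgt_vtx dr"
    using z by (auto simp: dr_def)
qed

lemma ctx_eq_lift_single:
  assumes v: "dvalid H k xl" "dvalid H k xr" and p: "p \<subseteq> {1..n}"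
    and ll: "liftable k p (noncollapsed_lifts [xl]) s" and lr: "liftable k p (noncollapsed_lifts [xr]) s"
    and c: "collapsed_datum (lift_datum xl) \<longleftrightarrow> collapsed_datum (lift_datum xr)"
    and b: "\<not> collapsed_datum (lift_datum xl) \<Longrightarrow> ([lift_datum xl], [lift_datum xr]) \<in> basic S k
      \<and> src_vtx (lift_datum xl) = src_vtx (lift_datum xr) \<and> tgt_vtx (lift_datum xl) = tgt_vtx (lift_datum xr)"
  shows "ctx_eq S k (vtx p) (vtx s) (bridged_to k p (noncollapsed_lifts [xl]) s)
           (bridged_to k p (noncollapsed_lifts [xr]) s)"
proof (cases "collapsed_datum (lift_datum xl)")
  case True
  then show ?thesis using c cvalid_bridged_to[OF ll p] by (simp add: noncollapsed_lifts_def ctx_eq_refl)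
next
  case False
  have "dvalid S k (lift_datum xl)" "dvalid S k (lift_datum xr)" using v lift_datum_valid by blast+
  then have "ctx_eq S k (vtx (src_vtx (lift_datum xl))) (vtx (tgt_vtx (lift_datum xl)))
      [lift_datum xl] [lift_datum xr]"
    using ctx_eq_basic[OF vertices_closed_S] cvalid_single_S b[OF False] by metis
  moreover have "bridgeable p (src_vtx (lift_datum xl))" "bridgeable (tgt_vtx (lift_datum xl)) s"
    using liftable_single[OF _ False] ll by (simp_all add: noncollapsed_lifts_def)
  ultimately have "ctx_eq S k (vtx p) (vtx s)
      (bridged_to k p (filter (\<lambda>d. \<not> collapsed_datum d) [lift_datum xl]) s)
      (bridged_to k p (filter (\<lambda>d. \<not> collapsed_datum d) [lift_datum xr]) s)"
    by (rule ctx_eq_bridged_to_noncollapsed[OF _ _ _ p])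
  then show ?thesis by (simp only: noncollapsed_lifts_def list.map)
qed

lemma ctx_eq_lift_compose:
  assumes v: "\<forall>x\<in>set [(N, X, u, v, gs), (N, X, v, w, hs), (N, X, u, w, map2 (@) gs hs)]. dvalid H k x"
    and p: "p \<subseteq> {1..n}"
    and ll: "liftable k p (noncollapsed_lifts [(N, X, u, v, gs), (N, X, v, w, hs)]) s"
    and lr: "liftable k p (noncollapsed_lifts [(N, X, u, w, map2 (@) gs hs)]) s"
  shows "ctx_eq S k (vtx p) (vtx s) (bridged_to k p (noncollapsed_lifts [(N, X, u, v, gs), (N, X, v, w, hs)]) s)
           (bridged_to k p (noncollapsed_lifts [(N, X, u, w, map2 (@) gs hs)]) s)"
proof -
  define y where "y = rep X"
  have d: "dvalid S k (N, y, u, v, gs)" "dvalid S k (N, y, v, w, hs)" "dvalid S k (N, y, u, w, map2 (@) gs hs)"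
    using v lift_datum_valid by (auto simp: y_def)
  have m: "y u \<subseteq> y v" "y v \<subseteq> y w" using dvalid_S_vertices(1)[OF d(1)] dvalid_S_vertices(1)[OF d(2)] by simp_all
  show ?thesis
  proof (cases "collapsed_datum (N, y, u, w, map2 (@) gs hs)")
    case True
    then have "collapsed_vtx (y u)" "collapsed_vtx (y w)" by (simp_all add: collapsed_datum_def)
    moreover have "covers (y u) (y w)" using bridgeable_covers bridgeable_collapsed calculation m by blast
    ultimately have "collapsed_vtx (y v)" using m by (auto simp: covers_def)
    then have "noncollapsed_lifts [(N, X, u, v, gs), (N, X, v, w, hs)] = noncollapsed_lifts [(N, X, u, w, map2 (@) gs hs)]"
      using True by (simp add: noncollapsed_lifts_def collapsed_datum_def y_def)
    then show ?thesis using cvalid_bridged_to[OF ll p] by (simp add: ctx_eq_refl)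
  next
    case False
    have "cvalid S k (vtx (y u)) (vtx (y w)) [(N, y, u, v, gs), (N, y, v, w, hs)]"
      using d dvalid_S_vertices[OF d(2)] vtx_cell by (simp add: cvalid_Cons[OF vertices_closed_S])
    then have "ctx_eq S k (vtx (y u)) (vtx (y w)) [(N, y, u, v, gs), (N, y, v, w, hs)] [(N, y, u, w, map2 (@) gs hs)]"
      using ctx_eq_basic[OF vertices_closed_S basic_composeI] cvalid_single_S[OF d(3)] by simp
    moreover have "bridgeable p (y u)" "bridgeable (y w) s"
      using liftable_single[OF _ False] lr by (simp_all add: noncollapsed_lifts_def y_def)
    ultimately have "ctx_eq S k (vtx p) (vtx s)
        (bridged_to k p (filter (\<lambda>d. \<not> collapsed_datum d) [(N, y, u, v, gs), (N, y, v, w, hs)]) s)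
        (bridged_to k p (filter (\<lambda>d. \<not> collapsed_datum d) [(N, y, u, w, map2 (@) gs hs)]) s)"
      by (rule ctx_eq_bridged_to_noncollapsed[OF _ _ _ p])
    then show ?thesis by (simp only: noncollapsed_lifts_def list.map lift_datum.simps y_def)
  qed
qed

lemma ctx_eq_lift_unit:
  assumes v: "dvalid H k (N, X, u, u, replicate (Suc k) [])" and p: "p \<subseteq> {1..n}"
    and ll: "liftable k p (noncollapsed_lifts [(N, X, u, u, replicate (Suc k) [])]) s"
  shows "ctx_eq S k (vtx p) (vtx s) (bridged_to k p (noncollapsed_lifts [(N, X, u, u, replicate (Suc k) [])]) s)
           (bridged_to k p [] s)"
proof (cases "collapsed_datum (N, rep X, u, u, replicate (Suc k) [])")
  case True
  then show ?thesis using cvalid_bridged_to[OF ll p] by (simp add: noncollapsed_lifts_def ctx_eq_refl)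
next
  case False
  have d: "dvalid S k (N, rep X, u, u, replicate (Suc k) [])" using v lift_datum_valid by auto
  then have "ctx_eq S k (vtx (rep X u)) (vtx (rep X u)) [(N, rep X, u, u, replicate (Suc k) [])] []"
    using ctx_eq_loop_datum[OF vertices_closed_S d] by simp
  moreover have "bridgeable p (rep X u)" "bridgeable (rep X u) s"
    using liftable_single[OF _ False] ll by (simp_all add: noncollapsed_lifts_def del: replicate_Suc)
  ultimately have "ctx_eq S k (vtx p) (vtx s)
      (bridged_to k p (filter (\<lambda>d. \<not> collapsed_datum d) [(N, rep X, u, u, replicate (Suc k) [])]) s)
      (bridged_to k p (filter (\<lambda>d. \<not> collapsed_datum d) []) s)"
    by (rule ctx_eq_bridged_to_noncollapsed[OF _ _ _ p])
  then show ?thesis by (simp only: noncollapsed_lifts_def list.map lift_datum.simps filter.simps)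
qed

lemma ctx_eq_lift_basic:
  assumes b: "(l, r) \<in> basic H k" and v: "\<forall>x\<in>set (l @ r). dvalid H k x" and p: "p \<subseteq> {1..n}"
    and ll: "liftable k p (noncollapsed_lifts l) s" and lr: "liftable k p (noncollapsed_lifts r) s"
  shows "ctx_eq S k (vtx p) (vtx s) (bridged_to k p (noncollapsed_lifts l) s) (bridged_to k p (noncollapsed_lifts r) s)"
  using b
proof (cases rule: basic_cases)
  case (pequiv N X u w gs gs')
  then show ?thesis
    using ctx_eq_lift_single[OF _ _ p ll[unfolded pequiv] lr[unfolded pequiv]] v basic_pequivI[OF pequiv(3), of "rep X" S k]
    by (simp add: collapsed_datum_def)
next
  case (transport M N f X u w gs)
  have Xuw: "X \<in> cells H N" "u \<subseteq> {1..M}" "w \<subseteq> {1..M}"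
    using v transport nsimp_endpoints[of M u w k gs] by auto
  show ?thesis
    using ctx_eq_lift_single[OF _ _ p ll[unfolded transport(1)] lr[unfolded transport(2)]
        lift_transport(1)[OF transport(3) Xuw] lift_transport(2)[OF transport(3) Xuw, of gs k]] v transport
    by simp
next
  case compose
  then show ?thesis using ctx_eq_lift_compose[OF _ p] v ll lr by simp
next
  case unit
  then show ?thesis using ctx_eq_lift_unit[OF _ p] v ll by (simp del: replicate_Suc)
qed

fun chain_start :: "vmap datum list \<Rightarrow> nat set \<Rightarrow> nat set" where
  "chain_start [] b = b"
| "chain_start (d # F) b = src_vtx d"

lemma liftable_append:
  "liftable k p (F @ G) s \<longleftrightarrow> bridgeable_chain p F \<and> (\<forall>d\<in>set F. dvalid S k d) \<and> liftable k (chain_end p F) G s"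
  by (auto simp: liftable_def bridgeable_chain_append chain_end_append)

lemma liftable_chain_start:
  "liftable k q K b \<Longrightarrow> bridgeable q (chain_start K b) \<and> liftable k (chain_start K b) K b"
  by (cases K) (auto simp: liftable_def)

lemma chain_start_range:
  assumes "\<forall>d\<in>set K. dvalid S k d" "b \<subseteq> {1..n}"
  shows "chain_start K b \<subseteq> {1..n}"
proof (cases K)
  case (Cons d K')
  then have d: "dvalid S k d" using assms by simp
  then show ?thesis using dvalid_S_vertices(1,2)[OF d] Cons by auto
qed (use assms in simp)

lemma bridged_to_chain_start:
  "bridged_to k q K b = bridge k q (chain_start K b) @ bridged_to k (chain_start K b) K b"
  by (cases K) (simp_all add: bridged_to_def)

lemma bridged_to_append: "bridged_to k p (F @ G) s = bridged k p F @ bridged_to k (chain_end p F) G s"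
  by (simp add: bridged_to_def bridged_append chain_end_append)

lemma lift_chain_split:
  assumes "cvalid H k (qvtx a) (qvtx b) (D @ X @ E)" "a \<subseteq> {1..n}" "admissible_src a" "admissible_tgt b"
  defines "p \<equiv> chain_end a (noncollapsed_lifts D)" and "s \<equiv> chain_start (noncollapsed_lifts E) b"
  shows "lift_chain k a b (D @ X @ E) =
           bridged k a (noncollapsed_lifts D) @ bridged_to k p (noncollapsed_lifts X) s
           @ bridged_to k s (noncollapsed_lifts E) b"
    and "liftable k p (noncollapsed_lifts X) s" and "liftable k s (noncollapsed_lifts E) b"
proof -
  define q where "q = chain_end p (noncollapsed_lifts X)"
  have L: "bridgeable_chain p (noncollapsed_lifts X)" "\<forall>d\<in>set (noncollapsed_lifts X). dvalid S k d"
    "liftable k q (noncollapsed_lifts E) b"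
    using liftable_lift[OF assms(1-4)] by (simp_all add: liftable_append p_def q_def)
  note E = liftable_chain_start[OF L(3), folded s_def]
  show "liftable k p (noncollapsed_lifts X) s" "liftable k s (noncollapsed_lifts E) b"
    using L E by (simp_all add: liftable_def q_def)
  show "lift_chain k a b (D @ X @ E) =
      bridged k a (noncollapsed_lifts D) @ bridged_to k p (noncollapsed_lifts X) s
      @ bridged_to k s (noncollapsed_lifts E) b"
    using bridged_to_chain_start[of k q "noncollapsed_lifts E" b]
    by (simp add: lift_chain_def bridged_to_append p_def s_def q_def) (simp add: bridged_to_def)
qed

lemma ceq_lift_chain_step:
  assumes lr: "(l, r) \<in> basic H k"
    and v: "cvalid H k (qvtx a) (qvtx b) (D @ l @ E)" "cvalid H k (qvtx a) (qvtx b) (D @ r @ E)"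
    and ab: "a \<subseteq> {1..n}" "b \<subseteq> {1..n}" and adm: "admissible_src a" "admissible_tgt b"
  shows "(lift_chain k a b (D @ l @ E), lift_chain k a b (D @ r @ E)) \<in> ceq S k"
proof -
  define p where "p = chain_end a (noncollapsed_lifts D)"
  define s where "s = chain_start (noncollapsed_lifts E) b"
  note Sl = lift_chain_split[OF v(1) ab(1) adm, folded p_def s_def]
  note Sr = lift_chain_split[OF v(2) ab(1) adm, folded p_def s_def]
  have D: "bridgeable_chain a (noncollapsed_lifts D)" "\<forall>d\<in>set (noncollapsed_lifts D). dvalid S k d"
    using liftable_lift[OF v(1) ab(1) adm] by (simp_all add: liftable_append)
  then have P: "cvalid S k (vtx a) (vtx p) (bridged k a (noncollapsed_lifts D))" and p: "p \<subseteq> {1..n}"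
    using cvalid_bridged[OF _ _ ab(1)] by (simp_all add: p_def)
  have "\<forall>d\<in>set (noncollapsed_lifts E). dvalid S k d" using Sl(3) by (simp add: liftable_def)
  from chain_start_range[OF this ab(2)] have "s \<subseteq> {1..n}" by (simp add: s_def)
  then have Q: "cvalid S k (vtx s) (vtx b) (bridged_to k s (noncollapsed_lifts E) b)"
    using cvalid_bridged_to[OF Sl(3)] by blast
  have "\<forall>x\<in>set (l @ r). dvalid H k x" using cvalid_dvalid[OF v(1)] cvalid_dvalid[OF v(2)] by auto
  then have "ctx_eq S k (vtx p) (vtx s) (bridged_to k p (noncollapsed_lifts l) s)
      (bridged_to k p (noncollapsed_lifts r) s)"
    using ctx_eq_lift_basic[OF lr _ p Sl(2) Sr(2)] by blast
  then show ?thesis using ctx_eq_imp_ceq[OF ctx_eq_context[OF vertices_closed_S _ P Q]] Sl(1) Sr(1) by simp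
qed

lemma ceq_of_ceq_qdatum:
  assumes ne: "qvtx a \<noteq> qvtx b" and ab: "a \<subseteq> {1..n}" "b \<subseteq> {1..n}"
    and adm: "admissible_src a" "admissible_tgt b"
    and Y: "cvalid S k (vtx a) (vtx b) Y1" "cvalid S k (vtx a) (vtx b) Y2"
    and h: "(map qdatum Y1, map qdatum Y2) \<in> ceq H k"
  shows "(Y1, Y2) \<in> ceq S k"
proof -
  have "cvalid H k (qvtx a) (qvtx b) (map qdatum Y1)" using cvalid_qdatum[OF Y(1)] by simp
  then have "(lift_chain k a b (map qdatum Y1), lift_chain k a b (map qdatum Y2)) \<in> (ceq S k)\<^sup>*"
  proof (rule conjunct1[OF ceq_invariant[OF h _ ne]])
    fix Z Z' assume z: "cvalid H k (qvtx a) (qvtx b) Z" "cvalid H k (qvtx a) (qvtx b) Z'" "(Z, Z') \<in> crel H k"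
    from z(3) obtain D l r E where "Z = D @ l @ E" "Z' = D @ r @ E" "(l, r) \<in> basic H k"
      by (rule crel_cases)
    then show "(lift_chain k a b Z, lift_chain k a b Z') \<in> ceq S k \<and> (lift_chain k a b Z', lift_chain k a b Z) \<in> ceq S k"
      using ceq_lift_chain_step[OF _ _ _ ab adm] z ceq_sym by blast
  qed
  then show ?thesis
    using ceq_trans[OF ceq_trans[OF ctx_eq_imp_ceq[OF ctx_eq_lift_chain_qdatum[OF Y(1)]]]
      ceq_sym[OF ctx_eq_imp_ceq[OF ctx_eq_lift_chain_qdatum[OF Y(2)]]]]
    by simp
qed

lemma cvalid_vtx_subset: "cvalid S k (vtx p) (vtx b) Y \<Longrightarrow> p \<subseteq> b"
proof (induction Y arbitrary: p)
  case (Cons d Y)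
  then have d: "dvalid S k d" and "dsrc S d = vtx p" "cvalid S k (dtgt S d) (vtx b) Y"
    by (simp_all add: cvalid_Cons[OF vertices_closed_S])
  then show ?case using Cons.IH[of "tgt_vtx d"] dvalid_S_vertices[OF d] by auto
qed simp

lemma ctx_eq_bridge_chain:
  "cvalid S k (vtx p) (vtx b) Y \<Longrightarrow> bridgeable p b \<Longrightarrow> ctx_eq S k (vtx p) (vtx b) Y (bridge k p b)"
proof (induction Y arbitrary: p)
  case Nil
  then show ?case by (auto intro!: ctx_eq_refl)
next
  case (Cons d Y)
  then have d: "dvalid S k d" and "dsrc S d = vtx p" "cvalid S k (dtgt S d) (vtx b) Y"
    by (simp_all add: cvalid_Cons[OF vertices_closed_S])
  then have sd: "src_vtx d = p" and Y: "cvalid S k (vtx (tgt_vtx d)) (vtx b) Y"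
    using dvalid_S_vertices(3,4)[OF d] by simp_all
  have "p \<subseteq> tgt_vtx d" "tgt_vtx d \<subseteq> b" using dvalid_S_vertices(1)[OF d] sd cvalid_vtx_subset[OF Y] by simp_all
  then have t: "tgt_vtx d = p \<or> tgt_vtx d = b" using bridgeable_covers[OF Cons.prems(2)] by (simp add: covers_def)
  then have b: "bridgeable p (tgt_vtx d)" "bridgeable (tgt_vtx d) b" using Cons.prems(2) by auto
  have "ctx_eq S k (vtx p) (vtx b) ([d] @ Y) (bridge k p (tgt_vtx d) @ Y)"
    using ctx_eq_append_right[OF vertices_closed_S ctx_eq_bridge[OF d] Y] sd b(1) by simp
  moreover have "cvalid S k (vtx p) (vtx (tgt_vtx d)) (bridge k p (tgt_vtx d))"
    using ctx_eq_cvalid[OF ctx_eq_bridge[OF d]] sd b(1) by simp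
  then have "ctx_eq S k (vtx p) (vtx b) (bridge k p (tgt_vtx d) @ Y) (bridge k p (tgt_vtx d) @ bridge k (tgt_vtx d) b)"
    using ctx_eq_append_left[OF vertices_closed_S _ Cons.IH[OF Y b(2)]] by blast
  ultimately show ?case using ctx_eq_trans bridge_append[OF b] by fastforce
qed

lemma ctx_eq_drop_collapsed_H:
  "cvalid H k \<alpha> \<beta> X \<Longrightarrow> ctx_eq H k \<alpha> \<beta> X (filter (\<lambda>x. \<not> collapsed_datum (lift_datum x)) X)"
proof (induction X arbitrary: \<alpha>)
  case Nil
  then show ?case by (auto intro!: ctx_eq_refl)
next
  case (Cons x X)
  then have x: "dvalid H k x" "dsrc H x = \<alpha>" and X: "cvalid H k (dtgt H x) \<beta> X"
    by (auto simp: cvalid_Cons[OF vertices_closed_H])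
  note IH = Cons.IH[OF X]
  show ?case
  proof (cases "collapsed_datum (lift_datum x)")
    case False
    have "cvalid H k \<alpha> (dtgt H x) [x]" using x vertices_closedD[OF vertices_closed_H x(1)]
      by (simp add: cvalid_single[OF vertices_closed_H])
    from ctx_eq_append_left[OF vertices_closed_H this IH] show ?thesis using False by simp
  next
    case True
    then have pt: "\<alpha> = pt" "dtgt H x = pt"
      using lift_datum_valid[OF x(1)] x qvtx_collapsed by (auto simp: collapsed_datum_def)
    then have "ctx_eq H k \<alpha> \<beta> ([x] @ X) ([] @ X)"
      using ctx_eq_append_right[OF vertices_closed_H ctx_eq_collapsed_H[OF x(1) True]] X by simp
    then show ?thesis using ctx_eq_trans IH True pt by fastforce
  qed
qed

lemma filter_qdatum_bridge: "filter (\<lambda>x. \<not> collapsed_datum (lift_datum x)) (map qdatum (bridge k p s)) = []"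
proof -
  have "collapsed_vtx (rep (C 1) {})" "collapsed_vtx (rep (C 1) {1})"
    using collapsed_vtx_apply[OF rep_collapsed] by auto
  then show ?thesis
    using crit_collapsed by (simp add: bridge_def crit_datum_def qcls_def collapsed_datum_def qmap_apply)
qed

lemma filter_qdatum_bridged:
  "\<forall>d\<in>set F. dvalid S k d \<and> \<not> collapsed_datum d \<Longrightarrow>
     filter (\<lambda>x. \<not> collapsed_datum (lift_datum x)) (map qdatum (bridged k p F)) = map qdatum F"
proof (induction F arbitrary: p)
  case (Cons d F)
  then have "dvalid S k d" "\<not> collapsed_datum d" by auto
  then have "\<not> collapsed_datum (lift_datum (qdatum d))" using lift_qdatum(1) by blast
  then show ?case using Cons filter_qdatum_bridge by simp
qed simp

lemma qdatum_noncollapsed_lifts: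
  "\<forall>x\<in>set X. dvalid H k x \<Longrightarrow>
     map qdatum (noncollapsed_lifts X) = filter (\<lambda>x. \<not> collapsed_datum (lift_datum x)) X"
proof (induction X)
  case (Cons x X)
  obtain N Y u w gs where x: "x = (N, Y, u, w, gs)" by (cases x)
  have Y: "Y \<in> cells H N" and "nsimp N u w k gs" using Cons.prems x by auto
  then have uw: "u \<subseteq> {1..N}" "w \<subseteq> {1..N}" using nsimp_endpoints by blast+
  have "qdatum (lift_datum x) = x" if "\<not> collapsed_datum (lift_datum x)"
    using Y
  proof (cases rule: cells_H_cases)
    case 1
    then show ?thesis
      using that collapsed_vtx_apply[OF rep_collapsed uw(1)] collapsed_vtx_apply[OF rep_collapsed uw(2)] x
      by (simp add: collapsed_datum_def)
  qed (simp_all add: x qcls_def qmap_apply)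
  then show ?case using Cons by (auto simp: noncollapsed_lifts_def)
qed simp

lemma ceq_qdatum_lift_chain:
  assumes X: "cvalid H k (qvtx a) (qvtx b) X" and ab: "a \<subseteq> {1..n}"
    and adm: "admissible_src a" "admissible_tgt b"
  shows "(map qdatum (lift_chain k a b X), X) \<in> ceq H k"
proof -
  have V: "cvalid H k (qvtx a) (qvtx b) (map qdatum (lift_chain k a b X))"
    using cvalid_qdatum[OF cvalid_lift_chain[OF X ab adm]] by simp
  have "\<forall>d\<in>set (noncollapsed_lifts X). dvalid S k d \<and> \<not> collapsed_datum d"
    using liftable_lift[OF X ab adm] by (auto simp: liftable_def noncollapsed_lifts_def)
  then have "filter (\<lambda>x. \<not> collapsed_datum (lift_datum x)) (map qdatum (lift_chain k a b X))
      = filter (\<lambda>x. \<not> collapsed_datum (lift_datum x)) X"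
    using filter_qdatum_bridged filter_qdatum_bridge qdatum_noncollapsed_lifts[OF cvalid_dvalid[OF X]]
    by (simp add: lift_chain_def bridged_to_def)
  then have "(map qdatum (lift_chain k a b X), filter (\<lambda>x. \<not> collapsed_datum (lift_datum x)) X) \<in> ceq H k"
    using ctx_eq_imp_ceq[OF ctx_eq_drop_collapsed_H[OF V]] by simp
  then show ?thesis
    using ceq_trans ceq_sym[OF ctx_eq_imp_ceq[OF ctx_eq_drop_collapsed_H[OF X]]] by blast
qed

lemma Cmap_inj_on:
  assumes ab: "a \<subseteq> {1..n}" "b \<subseteq> {1..n}" and adm: "admissible_src a" "admissible_tgt b"
  shows "inj_on (Cmap H (qmap n i e) k) (Chom S k (vtx a) (vtx b))"
proof (rule inj_onI)
  fix c1 c2 assume "c1 \<in> Chom S k (vtx a) (vtx b)" "c2 \<in> Chom S k (vtx a) (vtx b)"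
    and eq: "Cmap H (qmap n i e) k c1 = Cmap H (qmap n i e) k c2"
  then obtain Y1 Y2 where Y: "c1 = ceq S k `` {Y1}" "cvalid S k (vtx a) (vtx b) Y1"
    "c2 = ceq S k `` {Y2}" "cvalid S k (vtx a) (vtx b) Y2" by (auto simp: Chom_def)
  have "(Y1, Y2) \<in> ceq S k"
  proof (cases "qvtx a = qvtx b")
    case True
    then have "bridgeable a b" using bridgeable_of_qvtx_eq adm by blast
    then show ?thesis
      using ctx_eq_imp_ceq[OF ctx_eq_bridge_chain[OF Y(2)]] ctx_eq_imp_ceq[OF ctx_eq_bridge_chain[OF Y(4)]]
        ceq_trans ceq_sym by blast
  next
    case False
    moreover have "(map qdatum Y1, map qdatum Y2) \<in> ceq H k"
      using eq Y by (simp add: Cmap_class ceq_Image_eq_iff)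
    ultimately show ?thesis using ceq_of_ceq_qdatum ab adm Y(2,4) by blast
  qed
  then show "c1 = c2" using Y by (simp add: ceq_Image_eq_iff)
qed

lemma Cmap_image:
  assumes ab: "a \<subseteq> {1..n}" and adm: "admissible_src a" "admissible_tgt b"
  shows "Cmap H (qmap n i e) k ` Chom S k (vtx a) (vtx b) = Chom H k (qvtx a) (qvtx b)"
proof
  show "Cmap H (qmap n i e) k ` Chom S k (vtx a) (vtx b) \<subseteq> Chom H k (qvtx a) (qvtx b)"
    using cvalid_qdatum by (fastforce simp: Chom_def Cmap_class)
next
  show "Chom H k (qvtx a) (qvtx b) \<subseteq> Cmap H (qmap n i e) k ` Chom S k (vtx a) (vtx b)"
  proof
    fix c assume "c \<in> Chom H k (qvtx a) (qvtx b)"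
    then obtain X where X: "c = ceq H k `` {X}" "cvalid H k (qvtx a) (qvtx b) X" by (auto simp: Chom_def)
    then have "c = Cmap H (qmap n i e) k (ceq S k `` {lift_chain k a b X})"
      using ceq_sym[OF ceq_qdatum_lift_chain[OF X(2) ab adm]] by (simp add: Cmap_class ceq_Image_eq_iff)
    moreover have "ceq S k `` {lift_chain k a b X} \<in> Chom S k (vtx a) (vtx b)"
      using cvalid_lift_chain[OF X(2) ab adm] by (auto simp: Chom_def)
    ultimately show "c \<in> Cmap H (qmap n i e) k ` Chom S k (vtx a) (vtx b)" by blast
  qed
qed

theorem Cmap_bij:
  assumes "a \<subseteq> {1..n}" "b \<subseteq> {1..n}" "admissible_src a" "admissible_tgt b"
  shows "bij_betw (Cmap H (qmap n i e) k) (Chom S k (vtx a) (vtx b))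
           (Chom H k (qmap n i e 0 (vtx a)) (qmap n i e 0 (vtx b)))"
  using Cmap_inj_on[OF assms] Cmap_image[OF assms(1,3,4)] by (simp add: bij_betw_def)

end

section \<open>The cube and the box\<close>

lemma crit_eq_edge_insert:
  "1 \<le> i \<Longrightarrow> i \<le> n \<Longrightarrow> crit n i e = edge (if e then {} else {1..n} - {i}) (insert i (if e then {} else {1..n} - {i}))"
  by (auto simp: crit_def edge_def rest_def fun_eq_iff insert_absorb)

lemma cmor_crit: "1 \<le> i \<Longrightarrow> i \<le> n \<Longrightarrow> cmor 1 n (crit n i e)"
  using crit_eq_edge_insert cmor_edge_insert[of n i "if e then {} else {1..n} - {i}"] by auto

lemma cube_subcomplex_cube: "1 \<le> i \<Longrightarrow> i \<le> n \<Longrightarrow> cube_subcomplex (cube n) n i e"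
proof unfold_locales
  fix y N assume "y \<in> cells (cube n) N"
  then have y: "cmor N n y" by (simp add: cube_def cells_def)
  have "y = rest N (rest n id \<circ> y)"
    using cmor_range[OF y] cmor_supp[OF y] by (auto simp: rest_def fun_eq_iff)
  moreover have "inj_on (rest n id) (Pow {1..n})" by (auto simp: inj_on_def rest_def)
  moreover have "rest n id \<in> cells (cube n) n" using cmor.cid by (simp add: cube_def cells_def)
  ultimately show "\<exists>M F g. F \<in> cells (cube n) M \<and> cmor N M g \<and> y = rest N (F \<circ> g) \<and> inj_on F (Pow {1..M})"
    using y by blast
qed (auto simp: cube_def cells_def act_def cmor_comp cmor_crit vtx_cmor)

lemma box_cells:
  "cells (box n i e) m = {f. cmor m n f \<and> (\<exists>j d g. 1 \<le> j \<and> j \<le> n \<and> (j, d) \<noteq> (i, e)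
     \<and> cmor m (n - 1) g \<and> f = rest m (face j d \<circ> g))}"
  by (simp add: box_def cells_def)

lemma box_cells_closed:
  assumes x: "x \<in> cells (box n i e) N" and f: "cmor M N f"
  shows "rest M (x \<circ> f) \<in> cells (box n i e) M"
proof -
  obtain j d g where jd: "1 \<le> j" "j \<le> n" "(j, d) \<noteq> (i, e)" "cmor N (n - 1) g" "x = rest N (face j d \<circ> g)"
    and xc: "cmor N n x" using x by (auto simp: box_cells)
  have "rest M (x \<circ> f) = rest M (face j d \<circ> rest M (g \<circ> f))"
    using jd(5) cmor_range[OF f] by (auto simp: rest_def fun_eq_iff)
  then show ?thesis using jd cmor_comp[OF jd(4) f] cmor_comp[OF xc f] by (auto simp: box_cells)
qed

text \<open>Since \<open>n \<ge> 2\<close> there is a coordinate \<open>j \<noteq> i\<close>; every vertex and the critical edge are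
  constant in it, so they lie in a face of the box.\<close>

lemma box_cell_of_const_coord:
  assumes "2 \<le> n" "1 \<le> i" "i \<le> n" and v: "cmor m n v"
    and j: "1 \<le> j" "j \<le> n" "j \<noteq> i" and const: "\<forall>A. A \<subseteq> {1..m} \<longrightarrow> (j \<in> v A) = (j \<in> v {})"
  shows "v \<in> cells (box n i e) m"
proof -
  define g where "g = rest m (degen j \<circ> v)"
  obtain n' where n': "n = Suc n'" using assms(1) by (cases n) auto
  have g: "cmor m (n - 1) g" using cmor.cdegen[of m n' v j] v j by (simp add: g_def n')
  have "rest m (face j (j \<in> v {}) \<circ> g) = v"
  proof
    fix A show "rest m (face j (j \<in> v {}) \<circ> g) A = v A"
    proof (cases "A \<subseteq> {1..m}")
      case True
      have "(j \<in> v A) = (j \<in> v {})" using const True by blast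
      with face_degen[OF j(1), of "v A"] have "face j (j \<in> v {}) (degen j (v A)) = v A" by simp
      then show ?thesis using True by (simp add: g_def rest_def)
    next
      case False
      then show ?thesis using cmor_supp[OF v False] by (simp add: rest_def)
    qed
  qed
  moreover have "(j, j \<in> v {}) \<noteq> (i, e)" using j(3) by simp
  ultimately have "\<exists>j' d g'. 1 \<le> j' \<and> j' \<le> n \<and> (j', d) \<noteq> (i, e) \<and> cmor m (n - 1) g' \<and> v = rest m (face j' d \<circ> g')"
    using j g by (intro exI[of _ j] exI[of _ "j \<in> v {}"] exI[of _ g]) simp
  then show ?thesis using v by (simp add: box_cells)
qed

lemma cube_subcomplex_box:
  assumes n: "2 \<le> n" and i: "1 \<le> i" "i \<le> n"
  shows "cube_subcomplex (box n i e) n i e"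
proof unfold_locales
  show "1 \<le> i" "i \<le> n" by (fact i)+
  show "x \<in> cells (box n i e) m \<Longrightarrow> cmor m n x" for x m by (simp add: box_cells)
  show "act (box n i e) = (\<lambda>m m' f x. rest m (x \<circ> f))" by (simp add: box_def act_def)
  show "x \<in> cells (box n i e) N \<Longrightarrow> cmor M N f \<Longrightarrow> rest M (x \<circ> f) \<in> cells (box n i e) M" for x N M f
    by (rule box_cells_closed)
  define j where "j = (if i = 1 then 2 else (1::nat))"
  have j: "1 \<le> j" "j \<le> n" "j \<noteq> i" using n i by (auto simp: j_def)
  have "j \<in> crit n i e A \<longleftrightarrow> j \<in> crit n i e {}" if "A \<subseteq> {1..1}" for A
    using that j by (auto simp: crit_def rest_def)
  then show "crit n i e \<in> cells (box n i e) 1"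
    using box_cell_of_const_coord[OF n i cmor_crit[OF i] j] by blast
  show "vtx v \<in> cells (box n i e) 0" if "v \<subseteq> {1..n}" for v
    using box_cell_of_const_coord[OF n i vtx_cmor[OF that] j] by (simp add: vtx_def rest_def)
next
  fix y N assume "y \<in> cells (box n i e) N"
  then obtain j d g where jd: "1 \<le> j" "j \<le> n" "(j, d) \<noteq> (i, e)" "cmor N (n - 1) g" "y = rest N (face j d \<circ> g)"
    by (auto simp: box_cells)
  define F where "F = rest (n - 1) (face j d)"
  have nS: "n = Suc (n - 1)" using n by simp
  have "F = rest (n - 1) (face j d \<circ> rest (n - 1) id)" by (auto simp: F_def rest_def fun_eq_iff)
  then have "F \<in> cells (box n i e) (n - 1)"
    using cmor_face[of j "n - 1" d] jd nS cmor.cid[of "n - 1"] by (auto simp: box_cells F_def)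
  moreover have "y = rest N (F \<circ> g)" using jd(5) cmor_range[OF jd(4)] by (auto simp: F_def rest_def fun_eq_iff)
  moreover have "inj_on F (Pow {1..n - 1})" using inj_face[of j d] by (auto simp: F_def inj_on_def rest_def)
  ultimately show "\<exists>M F g. F \<in> cells (box n i e) M \<and> cmor N M g \<and> y = rest N (F \<circ> g) \<and> inj_on F (Pow {1..M})"
    using jd(4) by blast
qed

theorem lemma4p2:
  fixes n i :: nat and e :: bool and a b :: "nat set"
  assumes "2 \<le> n" and "1 \<le> i" and "i \<le> n"
    and "a \<subseteq> {1..n}" and "b \<subseteq> {1..n}"
    and "e \<Longrightarrow> a \<noteq> {i}"
    and "\<not> e \<Longrightarrow> b \<noteq> {1..n} - {i}"
  shows "(\<forall>k. bij_betw (Cmap (box_hat n i e) (qmap n i e) k)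
                 (Chom (box n i e) k (vtx a) (vtx b))
                 (Chom (box_hat n i e) k (qmap n i e 0 (vtx a)) (qmap n i e 0 (vtx b))))
       \<and> (\<forall>k. bij_betw (Cmap (cube_hat n i e) (qmap n i e) k)
                 (Chom (cube n) k (vtx a) (vtx b))
                 (Chom (cube_hat n i e) k (qmap n i e 0 (vtx a)) (qmap n i e 0 (vtx b))))"
proof -
  interpret B: cube_subcomplex "box n i e" n i e using cube_subcomplex_box assms(1-3) .
  interpret C: cube_subcomplex "cube n" n i e using cube_subcomplex_cube assms(2,3) .
  have "B.admissible_src a" "B.admissible_tgt b"
    using assms(6,7) B.crit_src_tgt_cases by (auto simp: B.admissible_src_def B.admissible_tgt_def)
  moreover have "C.admissible_src a" "C.admissible_tgt b"
    using assms(6,7) C.crit_src_tgt_cases by (auto simp: C.admissible_src_def C.admissible_tgt_def)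
  ultimately show ?thesis
    using B.Cmap_bij C.Cmap_bij assms(4,5) by (simp add: box_hat_def cube_hat_def)
qed

end
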